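(* Let $\theta\mapsto (p_x(\theta),p_y(\theta),p_z(\theta))$ be differentiable with $p_x,p_y,p_z\ge0$ and $p_x+p_y+p_z\le1$, and consider the qubit channels \[ \Lambda_\theta(\rho)=(1-p_x-p_y-p_z)\rho+p_xX\rho X+p_yY\rho Y+p_zZ\rho Z, \] with $X,Y,Z$ the Pauli matrices. Let $q_\theta=(1-p_x(\theta)-p_y(\theta)-p_z(\theta),\,p_x(\theta),\,p_y(\theta),\,p_z(\theta))$, $\delta_\theta=\mathrm{d}q_\theta/\mathrm{d}\theta$ and $\Delta_\theta=\mathrm{d}\Lambda_\theta/\mathrm{d}\theta$. Then \[ G^{\min}_{\Lambda_\theta}(\Delta_\theta)=G^{\max}_{\Lambda_\theta}(\Delta_\theta)=J_{q_\theta}(\delta_\theta). \]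
   Context: A channel is a CPTP linear map; a tangent vector $\Delta$ at a channel $\Phi$ is a Hermiticity-preserving linear map with $\mathrm{tr}\,\Delta(X)=0$ for all $X$. A POVM $M$ is identified with the channel $\sigma\mapsto(\mathrm{tr}\,\sigma M_y)_y$. For a probability distribution $p$ on a finite set and real $\delta$ with $\sum_y\delta(y)=0$, $J_p(\delta)=\sum_y\delta(y)^2/p(y)$ (with $0/0=0$, $c/0=\infty$ for $c\neq0$). $G^{\min}_\Phi(\Delta):=\sup J_{M((\Phi\otimes\mathbf I)(\rho))}\big(M((\Delta\otimes\mathbf I)(\rho))\big)$ over all finite-dimensional auxiliary spaces $\mathcal K$, states $\rho$ on $\mathcal H_{\rm in}\otimes\mathcal K$ and POVMs $M$ on $\mathcal H_{\rm out}\otimes\mathcal K$. A classical tangent simulation of $(\Phi,\Delta)$ is a triple $(q,\delta,\Lambda)$: $q$ a probability distribution on a finite set $Y$, $\delta$ real on $Y$ with $\sum_y\delta(y)=0$, $\Lambda$ a channel from $\mathcal H_{\rm in}\otimes\mathbb C^Y$ to $\mathcal H_{\rm out}$ with $\Phi(X)=\Lambda(X\otimes q)$ and $\Delta(X)=\Lambda(X\otimes\delta)$ for all $X$ ($q,\delta$ as diagonal operators). $G^{\max}_\Phi(\Delta):=\inf J_q(\delta)$ over all such simulations ($\inf\emptyset=\infty$). *)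

theory Defs
  imports Complex_Main "HOL-Library.Extended_Real" "Jordan_Normal_Form.Matrix"
begin

text \<open>Linear maps between operator
spaces are functions on matrices (only their values on the relevant carrier matter).
Tensor products use the Kronecker ordering: index (i, c) of H (x) K is i * dim K + c.\<close>

definition mtrace :: "complex mat \<Rightarrow> complex" where
  "mtrace A = (\<Sum>i<dim_row A. A $$ (i,i))"

definition psd :: "nat \<Rightarrow> complex mat \<Rightarrow> bool" where
  "psd d A \<longleftrightarrow> A \<in> carrier_mat d d \<and>
     (\<forall>v \<in> carrier_vec d. Im ((A *\<^sub>v v) \<bullet> conjugate v) = 0 \<and> Re ((A *\<^sub>v v) \<bullet> conjugate v) \<ge> 0)"

definition density :: "nat \<Rightarrow> complex mat \<Rightarrow> bool" where
  "density d \<rho> \<longleftrightarrow> psd d \<rho> \<and> mtrace \<rho> = 1"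

definition povm :: "nat \<Rightarrow> nat \<Rightarrow> (nat \<Rightarrow> complex mat) \<Rightarrow> bool" where
  "povm d N M \<longleftrightarrow> (\<forall>y<N. psd d (M y)) \<and>
     (\<forall>i<d. \<forall>j<d. (\<Sum>y<N. M y $$ (i,j)) = (1\<^sub>m d :: complex mat) $$ (i,j))"

definition kron :: "complex mat \<Rightarrow> complex mat \<Rightarrow> complex mat" where
  "kron A B = mat (dim_row A * dim_row B) (dim_col A * dim_col B)
     (\<lambda>(i,j). A $$ (i div dim_row B, j div dim_col B) * B $$ (i mod dim_row B, j mod dim_col B))"

text \<open>(Phi (x) id_K)(rho) for Phi : M_n -> M_m and dim K = k.\<close>
definition tensor_id :: "nat \<Rightarrow> nat \<Rightarrow> nat \<Rightarrow> (complex mat \<Rightarrow> complex mat) \<Rightarrow> complex mat \<Rightarrow> complex mat" where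
  "tensor_id n m k \<Phi> \<rho> = mat (m*k) (m*k)
     (\<lambda>(r,s). \<Phi> (mat n n (\<lambda>(i,j). \<rho> $$ (i*k + r mod k, j*k + s mod k))) $$ (r div k, s div k))"

definition channel :: "nat \<Rightarrow> nat \<Rightarrow> (complex mat \<Rightarrow> complex mat) \<Rightarrow> bool" where
  "channel n m \<Phi> \<longleftrightarrow>
     (\<forall>X \<in> carrier_mat n n. \<Phi> X \<in> carrier_mat m m) \<and>
     (\<forall>a X Y. X \<in> carrier_mat n n \<longrightarrow> Y \<in> carrier_mat n n \<longrightarrow> \<Phi> (a \<cdot>\<^sub>m X + Y) = a \<cdot>\<^sub>m \<Phi> X + \<Phi> Y) \<and>
     (\<forall>X \<in> carrier_mat n n. mtrace (\<Phi> X) = mtrace X) \<and>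
     (\<forall>k>0. \<forall>\<rho>. psd (n*k) \<rho> \<longrightarrow> psd (m*k) (tensor_id n m k \<Phi> \<rho>))"

definition Jfi :: "nat set \<Rightarrow> (nat \<Rightarrow> real) \<Rightarrow> (nat \<Rightarrow> real) \<Rightarrow> ereal" where
  "Jfi A p \<delta> = (\<Sum>y\<in>A. if \<delta> y = 0 then 0 else if p y = 0 then \<infinity> else ereal (\<delta> y ^ 2 / p y))"

definition diag_op :: "nat \<Rightarrow> (nat \<Rightarrow> real) \<Rightarrow> complex mat" where
  "diag_op N f = mat N N (\<lambda>(i,j). if i = j then complex_of_real (f i) else 0)"

definition Gmin :: "nat \<Rightarrow> nat \<Rightarrow> (complex mat \<Rightarrow> complex mat) \<Rightarrow> (complex mat \<Rightarrow> complex mat) \<Rightarrow> ereal" where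
  "Gmin n m \<Phi> \<Delta> = Sup { Jfi {0..<N}
        (\<lambda>y. Re (mtrace (tensor_id n m k \<Phi> \<rho> * M y)))
        (\<lambda>y. Re (mtrace (tensor_id n m k \<Delta> \<rho> * M y)))
      | k \<rho> N M. k > 0 \<and> density (n*k) \<rho> \<and> povm (m*k) N M }"

definition Gmax :: "nat \<Rightarrow> nat \<Rightarrow> (complex mat \<Rightarrow> complex mat) \<Rightarrow> (complex mat \<Rightarrow> complex mat) \<Rightarrow> ereal" where
  "Gmax n m \<Phi> \<Delta> = Inf { Jfi {0..<N} q \<delta>
      | N q \<delta> \<Lambda>. (\<forall>y<N. q y \<ge> 0) \<and> (\<Sum>y<N. q y) = 1 \<and> (\<Sum>y<N. \<delta> y) = 0 \<and>
          channel (n*N) m \<Lambda> \<and>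
          (\<forall>X \<in> carrier_mat n n. \<Phi> X = \<Lambda> (kron X (diag_op N q)) \<and>
                                  \<Delta> X = \<Lambda> (kron X (diag_op N \<delta>))) }"

definition pauliX :: "complex mat" where "pauliX = mat_of_rows_list 2 [[0,1],[1,0]]"
definition pauliY :: "complex mat" where "pauliY = mat_of_rows_list 2 [[0,-\<i>],[\<i>,0]]"
definition pauliZ :: "complex mat" where "pauliZ = mat_of_rows_list 2 [[1,0],[0,-1]]"

text \<open>Pauli channel with weights (1 - a - b - c, a, b, c); by linearity in the weights,
  the same expression with derivative weights gives d Lambda / d theta.\<close>
definition pauli_map :: "real \<Rightarrow> real \<Rightarrow> real \<Rightarrow> real \<Rightarrow> complex mat \<Rightarrow> complex mat" where
  "pauli_map w a b c \<rho> = complex_of_real w \<cdot>\<^sub>m \<rho>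
     + complex_of_real a \<cdot>\<^sub>m (pauliX * \<rho> * pauliX)
     + complex_of_real b \<cdot>\<^sub>m (pauliY * \<rho> * pauliY)
     + complex_of_real c \<cdot>\<^sub>m (pauliZ * \<rho> * pauliZ)"

end

theory Submission
  imports Defs
begin

(*
  Write q = (w,x,y,z) for the Pauli weights and d = (dw,dx,dy,dz) for their
  derivatives.  The theorem reduces to a statement about one fixed parameter value:
  J_q(d) <= Gmin <= Gmax <= J_q(d), with the three inequalities proved as follows.

  * Gmin <= Gmax holds for every pair (Phi, Delta): if (q',d',Lambda) is a classical tangent
    simulation, then any probe state rho and POVM M turn (q',d') into the outcome statistics
    of (Phi, Delta) via a stochastic matrix r(y,y') = tr(Lambda(rho_y) M_y'), where rho_y is
    rho tagged with the classical label y.  Classical Fisher information J is monotone under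
    stochastic maps (a Cauchy-Schwarz inequality), which gives the bound.
  * Gmax <= J_q(d): the Pauli channel is simulated by the Kraus channel that applies the
    l-th Pauli matrix conditioned on the classical label l in {0..3}.
  * J_q(d) <= Gmin: feeding half of a maximally entangled state into the channel and
    measuring in the Bell basis reproduces the distributions q and d exactly.
*)

section \<open>Sesquilinear forms and positive semidefiniteness\<close>

text \<open>Matrices are treated as functions on index pairs; the form
  \<open>sform d A f g = \<langle>f, A g\<rangle>\<close> on \<open>\<complex>\<^sup>d\<close> carries all positivity arguments.\<close>

definition sform :: "nat \<Rightarrow> (nat \<Rightarrow> nat \<Rightarrow> complex) \<Rightarrow> (nat \<Rightarrow> complex) \<Rightarrow> (nat \<Rightarrow> complex) \<Rightarrow> complex" where
  "sform d A f g = (\<Sum>i<d. \<Sum>j<d. cnj (f i) * A i j * g j)"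

definition psd_form :: "nat \<Rightarrow> (nat \<Rightarrow> nat \<Rightarrow> complex) \<Rightarrow> bool" where
  "psd_form d A \<longleftrightarrow> (\<forall>f. Im (sform d A f f) = 0 \<and> Re (sform d A f f) \<ge> 0)"

definition basis_fun :: "nat \<Rightarrow> nat \<Rightarrow> complex" where
  "basis_fun t = (\<lambda>x. if x = t then 1 else 0)"

lemma psd_iff_psd_form: "psd d A \<longleftrightarrow> A \<in> carrier_mat d d \<and> psd_form d (\<lambda>i j. A $$ (i,j))"
proof -
  have key: "(A *\<^sub>v v) \<bullet> conjugate v = sform d (\<lambda>i j. A $$ (i,j)) (\<lambda>i. v $ i) (\<lambda>i. v $ i)"
    if "A \<in> carrier_mat d d" "v \<in> carrier_vec d" for v
    using that unfolding sform_def scalar_prod_def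
    by (auto simp: atLeast0LessThan sum_distrib_left sum_distrib_right mult_ac scalar_prod_def intro!: sum.cong)
  have vec: "sform d B (\<lambda>i. vec d f $ i) (\<lambda>i. vec d f $ i) = sform d B f f" for B f
    unfolding sform_def by (auto intro!: sum.cong)
  show ?thesis
  proof
    assume p: "psd d A"
    then have C: "A \<in> carrier_mat d d" unfolding psd_def by auto
    have "Im (sform d (\<lambda>i j. A $$ (i,j)) f f) = 0 \<and> Re (sform d (\<lambda>i j. A $$ (i,j)) f f) \<ge> 0" for f
    proof -
      have v: "vec d f \<in> carrier_vec d" by simp
      from p v have "Im ((A *\<^sub>v vec d f) \<bullet> conjugate (vec d f)) = 0 \<and> Re ((A *\<^sub>v vec d f) \<bullet> conjugate (vec d f)) \<ge> 0"
        unfolding psd_def by blast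
      then show ?thesis using key[OF C v] vec by simp
    qed
    then show "A \<in> carrier_mat d d \<and> psd_form d (\<lambda>i j. A $$ (i,j))" using C unfolding psd_form_def by auto
  next
    assume "A \<in> carrier_mat d d \<and> psd_form d (\<lambda>i j. A $$ (i,j))"
    then show "psd d A" unfolding psd_def psd_form_def using key by auto
  qed
qed

lemma sform_add_left: "sform d A (\<lambda>x. f x + g x) h = sform d A f h + sform d A g h"
  unfolding sform_def by (simp add: algebra_simps sum.distrib)
lemma sform_add_right: "sform d A h (\<lambda>x. f x + g x) = sform d A h f + sform d A h g"
  unfolding sform_def by (simp add: algebra_simps sum.distrib)
lemma sform_scale_left: "sform d A (\<lambda>x. c * f x) g = cnj c * sform d A f g"
  unfolding sform_def by (simp add: algebra_simps sum_distrib_left)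
lemma sform_scale_right: "sform d A f (\<lambda>x. c * g x) = c * sform d A f g"
  unfolding sform_def by (simp add: algebra_simps sum_distrib_left)

lemmas sform_linear = sform_add_left sform_add_right sform_scale_left sform_scale_right

lemma cnj_basis_fun: "cnj (basis_fun t i) = basis_fun t i"
  by (simp add: basis_fun_def)

lemma sum_basis_left: "t < (d::nat) \<Longrightarrow> (\<Sum>i<d. basis_fun t i * (X i::complex)) = X t"
proof -
  assume "t < d"
  have "(\<Sum>i<d. basis_fun t i * X i) = (\<Sum>i<d. if i = t then X i else 0)"
    unfolding basis_fun_def by (rule sum.cong) auto
  then show ?thesis using \<open>t < d\<close> by (simp add: sum.delta')
qed
lemma sum_basis_right: "t < (d::nat) \<Longrightarrow> (\<Sum>i<d. (X i::complex) * basis_fun t i) = X t"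
  using sum_basis_left[of t d X] by (simp add: mult.commute)

lemma sform_basis_left: "t < d \<Longrightarrow> sform d A (basis_fun t) g = (\<Sum>j<d. A t j * g j)"
proof -
  assume "t < d"
  have "sform d A (basis_fun t) g = (\<Sum>i<d. basis_fun t i * (\<Sum>j<d. A i j * g j))"
    unfolding sform_def cnj_basis_fun by (simp add: sum_distrib_left mult.assoc)
  then show ?thesis using \<open>t < d\<close> by (simp add: sum_basis_left)
qed

lemma sform_basis_basis: "s < d \<Longrightarrow> t < d \<Longrightarrow> sform d A (basis_fun s) (basis_fun t) = A s t"
  by (simp add: sform_basis_left sum_basis_right)

text \<open>A positive form has a Hermitian matrix (polarisation with \<open>e\<^sub>i + e\<^sub>j\<close> and \<open>e\<^sub>i + \<i> e\<^sub>j\<close>).\<close>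
lemma psd_form_hermitian:
  assumes "psd_form d A" "i < d" "j < d"
  shows "A j i = cnj (A i j)"
proof -
  have real: "Im (sform d A f f) = 0" for f using assms(1) unfolding psd_form_def by auto
  have ii: "Im (A i i) = 0" and jj: "Im (A j j) = 0"
    using real[of "basis_fun i"] real[of "basis_fun j"] sform_basis_basis assms by simp_all
  have "sform d A (\<lambda>x. basis_fun i x + basis_fun j x) (\<lambda>x. basis_fun i x + basis_fun j x)
      = A i i + A i j + A j i + A j j"
    using assms by (simp only: sform_linear sform_basis_basis) simp
  with real[of "\<lambda>x. basis_fun i x + basis_fun j x"] ii jj have im: "Im (A i j) + Im (A j i) = 0" by simp
  have "sform d A (\<lambda>x. basis_fun i x + \<i> * basis_fun j x) (\<lambda>x. basis_fun i x + \<i> * basis_fun j x)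
      = A i i + \<i> * A i j - \<i> * A j i + A j j"
    using assms by (simp only: sform_linear sform_basis_basis) simp
  with real[of "\<lambda>x. basis_fun i x + \<i> * basis_fun j x"] ii jj have re: "Re (A i j) - Re (A j i) = 0" by simp
  from im re show ?thesis by (simp add: complex_eq_iff)
qed

lemma sform_swap_hermitian:
  assumes "\<And>i j. i < d \<Longrightarrow> j < d \<Longrightarrow> A j i = cnj (A i j)"
  shows "sform d A g f = cnj (sform d A f g)"
proof -
  have "sform d A g f = (\<Sum>j<d. \<Sum>i<d. cnj (g i) * A i j * f j)" unfolding sform_def by (rule sum.swap)
  also have "\<dots> = (\<Sum>j<d. \<Sum>i<d. cnj (cnj (f j) * A j i * g i))"
  proof (intro sum.cong refl)
    fix i j assume "i \<in> {..<d}" "j \<in> {..<d}"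
    then have "A i j = cnj (A j i)" using assms[of j i] by simp
    then show "cnj (g i) * A i j * f j = cnj (cnj (f j) * A j i * g i)" by (simp add: mult_ac)
  qed
  also have "\<dots> = cnj (sform d A f g)" unfolding sform_def cnj_sum ..
  finally show ?thesis .
qed

lemma psd_form_diag:
  assumes "psd_form d A" "t < d"
  shows "A t t = of_real (Re (A t t)) \<and> Re (A t t) \<ge> 0"
proof -
  have "Im (sform d A (basis_fun t) (basis_fun t)) = 0 \<and> Re (sform d A (basis_fun t) (basis_fun t)) \<ge> 0"
    using assms(1) unfolding psd_form_def by blast
  then show ?thesis using sform_basis_basis[OF assms(2) assms(2)] by (simp add: complex_eq_iff)
qed

text \<open>It is proved via nonnegativity of the
  quadratic \<open>x \<mapsto> \<langle>f - x c e\<^sub>t, A (f - x c e\<^sub>t)\<rangle>\<close>.\<close>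
lemma psd_form_cauchy_schwarz:
  assumes A: "psd_form d A" and t: "t < d"
  shows "(cmod (sform d A (basis_fun t) f))\<^sup>2 \<le> Re (A t t) * Re (sform d A f f)"
proof -
  define c where "c = sform d A (basis_fun t) f"
  define a where "a = Re (A t t)"
  define n where "n = (cmod c)\<^sup>2"
  define Q where "Q = Re (sform d A f f)"
  have herm: "\<And>i j. i < d \<Longrightarrow> j < d \<Longrightarrow> A j i = cnj (A i j)" using psd_form_hermitian[OF A] by blast
  have att: "A t t = of_real a" "a \<ge> 0" using psd_form_diag[OF A t] a_def by auto
  have cc: "c * cnj c = of_real n" unfolding n_def using complex_norm_square by simp
  have fe: "sform d A f (basis_fun t) = cnj c" unfolding c_def by (rule sform_swap_hermitian[OF herm])
  have ee: "sform d A (basis_fun t) (basis_fun t) = of_real a" using sform_basis_basis[OF t t] att by simp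
  have quadratic: "Q - 2*x*n + x\<^sup>2*n*a \<ge> 0" for x :: real
  proof -
    define \<alpha> where "\<alpha> = - (of_real x) * c"
    let ?g = "\<lambda>y. f y + \<alpha> * basis_fun t y"
    have "sform d A ?g ?g = sform d A f f + \<alpha> * sform d A f (basis_fun t)
        + cnj \<alpha> * sform d A (basis_fun t) f + cnj \<alpha> * (\<alpha> * sform d A (basis_fun t) (basis_fun t))"
      by (simp only: sform_linear) (simp add: algebra_simps)
    also have "\<dots> = sform d A f f - 2 * of_real x * (c * cnj c) + of_real x ^2 * (c * cnj c) * of_real a"
      unfolding fe ee c_def[symmetric] \<alpha>_def by (simp add: algebra_simps power2_eq_square)
    also have "\<dots> = sform d A f f + of_real (- 2*x*n + x\<^sup>2*n*a)" unfolding cc by simp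
    finally have "Re (sform d A ?g ?g) = Q - 2*x*n + x\<^sup>2*n*a" unfolding Q_def by simp
    then show ?thesis using A unfolding psd_form_def by metis
  qed
  have n0: "n \<ge> 0" unfolding n_def by simp
  have Q0: "Q \<ge> 0" using A unfolding Q_def psd_form_def by blast
  show ?thesis
  proof (cases "a = 0")
    case True
    have "n = 0"
    proof (rule ccontr)
      assume "n \<noteq> 0" then have np: "n > 0" using n0 by simp
      have "Q - 2*((Q+1)/(2*n))*n + ((Q+1)/(2*n))\<^sup>2*n*a \<ge> 0" by (rule quadratic)
      with True np show False by (simp add: field_simps)
    qed
    then show ?thesis using True Q0 unfolding n_def a_def c_def Q_def by simp
  next
    case False
    then have ap: "a > 0" using att by simp
    have "Q - 2*(1/a)*n + (1/a)\<^sup>2*n*a \<ge> 0" by (rule quadratic)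
    then have "n \<le> a * Q" using ap by (simp add: field_simps power2_eq_square)
    then show ?thesis unfolding n_def a_def Q_def c_def .
  qed
qed

subsection \<open>The trace of a product of positive matrices is nonnegative\<close>

definition trace_prod :: "nat \<Rightarrow> (nat \<Rightarrow> nat \<Rightarrow> complex) \<Rightarrow> (nat \<Rightarrow> nat \<Rightarrow> complex) \<Rightarrow> complex" where
  "trace_prod d A B = (\<Sum>i<d. \<Sum>j<d. A i j * B j i)"

lemma sform_rank_one:
  "sform d (\<lambda>i j. w i * cnj (w j)) f f = (\<Sum>i<d. cnj (f i) * w i) * cnj (\<Sum>i<d. cnj (f i) * w i)"
  unfolding sform_def cnj_sum sum_product
  by (rule sum.cong[OF refl], rule sum.cong[OF refl]) (simp add: mult_ac)

lemma trace_prod_rank_one_split: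
  "trace_prod d A B = trace_prod d (\<lambda>i j. A i j - w i * cnj (w j)) B + sform d B w w"
proof -
  have "sform d B w w = (\<Sum>i<d. \<Sum>j<d. w i * cnj (w j) * B j i)"
    unfolding sform_def by (subst sum.swap) (simp add: mult_ac)
  then show ?thesis unfolding trace_prod_def by (simp add: algebra_simps sum.distrib[symmetric] sum_subtractf)
qed

lemma psd_form_zero_diag:
  assumes A: "psd_form d A" and t: "t < d" and zero: "Re (A t t) = 0" and j: "j < d"
  shows "A t j = 0" and "A j t = 0"
proof -
  have "(cmod (sform d A (basis_fun t) (basis_fun j)))\<^sup>2 \<le> 0"
    using psd_form_cauchy_schwarz[OF A t, of "basis_fun j"] zero by simp
  then show row: "A t j = 0" using sform_basis_basis[OF t j, of A] by simp
  then show "A j t = 0" using psd_form_hermitian[OF A t j] by simp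
qed

text \<open>Peeling: if \<open>A\<^sub>t\<^sub>t > 0\<close>, then with \<open>w = A e\<^sub>t / \<surd>A\<^sub>t\<^sub>t\<close> the matrix \<open>A - w w\<^sup>*\<close>
  is still positive (by Cauchy-Schwarz) and has vanishing row and column \<open>t\<close>.\<close>
lemma psd_form_peel:
  assumes A: "psd_form d A" and t: "t < d" and pos: "Re (A t t) > 0"
    and w_def: "\<And>i. w i = A i t / of_real (sqrt (Re (A t t)))"
  shows "psd_form d (\<lambda>i j. A i j - w i * cnj (w j))"
    and "\<And>j. j < d \<Longrightarrow> w t * cnj (w j) = A t j"
    and "\<And>j. j < d \<Longrightarrow> w j * cnj (w t) = A j t"
proof -
  define a where "a = Re (A t t)"
  have herm: "\<And>i j. i < d \<Longrightarrow> j < d \<Longrightarrow> A j i = cnj (A i j)" using psd_form_hermitian[OF A] by blast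
  have att: "A t t = of_real a" using psd_form_diag[OF A t] unfolding a_def by auto
  have ap: "a > 0" using pos unfolding a_def .
  have sq: "of_real (sqrt a) * of_real (sqrt a) = (of_real a :: complex)"
    using ap by (metis of_real_mult real_sqrt_mult_self abs_of_pos)
  show row: "w t * cnj (w j) = A t j" if j: "j < d" for j
  proof -
    have "w t * cnj (w j) = A t t * cnj (A j t) / (of_real (sqrt a) * of_real (sqrt a))"
      unfolding w_def a_def by simp
    also have "\<dots> = A t j" using herm[OF t j] sq att ap by simp
    finally show ?thesis .
  qed
  show "w j * cnj (w t) = A j t" if j: "j < d" for j
    using arg_cong[OF row[OF j], of cnj] herm[OF t j] by (simp add: mult.commute)
  show "psd_form d (\<lambda>i j. A i j - w i * cnj (w j))"
    unfolding psd_form_def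
  proof
    fix f
    define c where "c = sform d A (basis_fun t) f"
    have "cnj (\<Sum>i<d. cnj (f i) * w i) = (\<Sum>i<d. f i * A t i) / of_real (sqrt a)"
      unfolding w_def a_def[symmetric] cnj_sum sum_divide_distrib
      by (rule sum.cong[OF refl]) (simp add: herm[OF t])
    then have proj: "cnj (\<Sum>i<d. cnj (f i) * w i) = c / of_real (sqrt a)"
      unfolding c_def sform_basis_left[OF t] by (simp add: mult.commute)
    have "sform d (\<lambda>i j. w i * cnj (w j)) f f = cnj (c / of_real (sqrt a)) * (c / of_real (sqrt a))"
      unfolding sform_rank_one using proj by (metis complex_cnj_cnj)
    also have "\<dots> = of_real ((cmod c)\<^sup>2 / a)" using sq
      by (simp add: complex_norm_square[symmetric] mult.commute)
    finally have "sform d (\<lambda>i j. A i j - w i * cnj (w j)) f f = sform d A f f - of_real ((cmod c)\<^sup>2 / a)"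
      unfolding sform_def by (simp add: algebra_simps sum_subtractf)
    moreover have "(cmod c)\<^sup>2 / a \<le> Re (sform d A f f)"
      using psd_form_cauchy_schwarz[OF A t, of f] ap unfolding c_def a_def by (simp add: field_simps)
    moreover have "Im (sform d A f f) = 0" using A unfolding psd_form_def by blast
    ultimately show "Im (sform d (\<lambda>i j. A i j - w i * cnj (w j)) f f) = 0 \<and>
        0 \<le> Re (sform d (\<lambda>i j. A i j - w i * cnj (w j)) f f)" by simp
  qed
qed

definition supported_last :: "nat \<Rightarrow> nat \<Rightarrow> (nat \<Rightarrow> nat \<Rightarrow> complex) \<Rightarrow> bool" where
  "supported_last d s A \<longleftrightarrow> (\<forall>i<d. \<forall>j<d. (i < d - s \<or> j < d - s) \<longrightarrow> A i j = 0)"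

text \<open>Induction on the block size: peeling a rank-one part \<open>w w\<^sup>*\<close> off row/column \<open>d - s - 1\<close>
  contributes \<open>\<langle>w, B w\<rangle> \<ge> 0\<close> and leaves a positive matrix supported on a smaller block.\<close>
lemma trace_prod_nonneg_block:
  assumes B: "psd_form d B"
  shows "psd_form d A \<Longrightarrow> supported_last d s A \<Longrightarrow> 0 \<le> Re (trace_prod d A B)"
proof (induction s arbitrary: A)
  case 0
  then show ?case by (auto simp: trace_prod_def supported_last_def)
next
  case (Suc s)
  note A = Suc.prems(1)
  show ?case
  proof (cases "d \<le> s")
    case True
    then show ?thesis using Suc.IH A Suc.prems(2) unfolding supported_last_def by simp
  next
    case False
    define t where "t = d - Suc s"
    have t: "t < d" and ds: "d - s = Suc t" using False unfolding t_def by auto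
    have Z: "A i j = 0" if "i < d" "j < d" "i < t \<or> j < t" for i j
      using Suc.prems(2) that unfolding supported_last_def t_def by blast
    show ?thesis
    proof (cases "Re (A t t) = 0")
      case True
      have "supported_last d s A"
        unfolding supported_last_def ds
        using Z psd_form_zero_diag[OF A t True] by (auto simp: less_Suc_eq)
      then show ?thesis using Suc.IH A by blast
    next
      case False
      then have pos: "Re (A t t) > 0" using psd_form_diag[OF A t] by simp
      define w where "w i = A i t / of_real (sqrt (Re (A t t)))" for i
      note peel = psd_form_peel[OF A t pos w_def]
      have "supported_last d s (\<lambda>i j. A i j - w i * cnj (w j))"
        unfolding supported_last_def
      proof (intro allI impI)
        fix i j assume i: "i < d" and j: "j < d" and ij: "i < d - s \<or> j < d - s"
        have wz: "w x = 0" if "x < t" for x using Z[OF _ t, of x] that t unfolding w_def by simp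
        show "A i j - w i * cnj (w j) = 0"
          using ij ds Z[OF i j] wz peel(2)[OF j] peel(3)[OF i] by (cases "i = t \<or> j = t") auto
      qed
      then have "0 \<le> Re (trace_prod d (\<lambda>i j. A i j - w i * cnj (w j)) B)" using Suc.IH peel(1) by blast
      moreover have "0 \<le> Re (sform d B w w)" using B unfolding psd_form_def by blast
      ultimately show ?thesis using trace_prod_rank_one_split[of d A B w] by simp
    qed
  qed
qed

lemma psd_form_trace_prod: "psd_form d A \<Longrightarrow> psd_form d B \<Longrightarrow> 0 \<le> Re (trace_prod d A B)"
  using trace_prod_nonneg_block[of d B A d] by (auto simp: supported_last_def)

lemma mtrace_mult:
  "A \<in> carrier_mat d d \<Longrightarrow> B \<in> carrier_mat d d \<Longrightarrow> mtrace (A * B) = trace_prod d (\<lambda>i j. A $$ (i,j)) (\<lambda>i j. B $$ (i,j))"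
  unfolding mtrace_def trace_prod_def by (simp add: scalar_prod_def atLeast0LessThan)

theorem psd_trace_mult_nonneg: "psd d A \<Longrightarrow> psd d B \<Longrightarrow> 0 \<le> Re (mtrace (A * B))"
  unfolding psd_iff_psd_form using mtrace_mult[of A d B] psd_form_trace_prod by simp

section \<open>Classical data processing for the Fisher information \<open>J\<close>\<close>

text \<open>Weighted Cauchy-Schwarz: \<open>(\<Sum> \<delta>\<^sub>y r\<^sub>y)\<^sup>2 / (\<Sum> q\<^sub>y r\<^sub>y) \<le> \<Sum> (\<delta>\<^sub>y\<^sup>2/q\<^sub>y) r\<^sub>y\<close>; it is
  the expansion of \<open>0 \<le> \<Sum> r\<^sub>y (\<delta>\<^sub>y - c q\<^sub>y)\<^sup>2/q\<^sub>y\<close> at the optimal \<open>c\<close>.\<close>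
lemma weighted_cauchy_schwarz:
  fixes q \<delta> r :: "nat \<Rightarrow> real" and N :: nat
  assumes q: "\<And>y. y < N \<Longrightarrow> q y \<ge> 0" and r: "\<And>y. y < N \<Longrightarrow> r y \<ge> 0"
    and z: "\<And>y. y < N \<Longrightarrow> q y = 0 \<Longrightarrow> \<delta> y = 0"
    and p: "(\<Sum>y<N. q y * r y) > 0"
  shows "(\<Sum>y<N. \<delta> y * r y)\<^sup>2 / (\<Sum>y<N. q y * r y) \<le> (\<Sum>y<N. \<delta> y ^ 2 / q y * r y)"
proof -
  define P where "P = (\<Sum>y<N. q y * r y)"
  define D where "D = (\<Sum>y<N. \<delta> y * r y)"
  define S where "S = (\<Sum>y<N. \<delta> y ^ 2 / q y * r y)"
  define c where "c = D / P"
  have expand: "r y * (\<delta> y - c * q y)\<^sup>2 / q y = \<delta> y ^ 2 / q y * r y - 2 * c * (\<delta> y * r y) + c\<^sup>2 * (q y * r y)"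
    if y: "y < N" for y
  proof (cases "q y = 0")
    case True then show ?thesis using z[OF y] by simp
  next
    case False then show ?thesis by (simp add: field_simps power2_eq_square)
  qed
  have "0 \<le> (\<Sum>y<N. r y * (\<delta> y - c * q y)\<^sup>2 / q y)"
    by (rule sum_nonneg) (simp add: q r)
  also have "\<dots> = S - 2 * c * D + c\<^sup>2 * P"
    unfolding S_def D_def P_def using expand
    by (simp add: sum.distrib sum_subtractf sum_distrib_left)
  also have "\<dots> = S - D\<^sup>2 / P" unfolding c_def using p unfolding P_def[symmetric]
    by (simp add: field_simps power2_eq_square)
  finally show ?thesis unfolding S_def D_def P_def by simp
qed

lemma fisher_term_processed:
  fixes q \<delta> r :: "nat \<Rightarrow> real"
  assumes q: "\<And>y. y < N \<Longrightarrow> q y \<ge> 0" and r: "\<And>y. y < N \<Longrightarrow> r y \<ge> 0"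
    and z: "\<And>y. y < N \<Longrightarrow> q y = 0 \<Longrightarrow> \<delta> y = 0"
  defines "p \<equiv> (\<Sum>y<N. q y * r y)" and "e \<equiv> (\<Sum>y<N. \<delta> y * r y)"
  shows "(if e = 0 then 0 else if p = 0 then \<infinity> else ereal (e\<^sup>2 / p)) \<le> ereal (\<Sum>y<N. \<delta> y ^ 2 / q y * r y)"
proof -
  have nonneg: "0 \<le> (\<Sum>y<N. \<delta> y ^ 2 / q y * r y)" by (rule sum_nonneg) (simp add: q r)
  show ?thesis
  proof (cases "e = 0")
    case True then show ?thesis using nonneg by simp
  next
    case False
    have "p \<ge> 0" unfolding p_def by (rule sum_nonneg) (simp add: q r)
    moreover have "p \<noteq> 0"
    proof
      assume "p = 0"
      then have "\<forall>y\<in>{..<N}. q y * r y = 0"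
        unfolding p_def by (subst sum_nonneg_eq_0_iff[symmetric]) (auto simp: q r)
      then have "e = 0" unfolding e_def by (intro sum.neutral) (use z in auto)
      with False show False by simp
    qed
    ultimately have "p > 0" by simp
    then have "e\<^sup>2 / p \<le> (\<Sum>y<N. \<delta> y ^ 2 / q y * r y)"
      using weighted_cauchy_schwarz[of N q r \<delta>] q r z unfolding p_def e_def by auto
    then show ?thesis using False \<open>p > 0\<close> by simp
  qed
qed

theorem fisher_data_processing:
  fixes q \<delta> :: "nat \<Rightarrow> real" and r :: "nat \<Rightarrow> nat \<Rightarrow> real"
  assumes q: "\<And>y. y < N \<Longrightarrow> q y \<ge> 0"
    and r: "\<And>y y'. y < N \<Longrightarrow> y' < N' \<Longrightarrow> r y y' \<ge> 0"
    and r1: "\<And>y. y < N \<Longrightarrow> (\<Sum>y'<N'. r y y') = 1"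
    and p: "\<And>y'. y' < N' \<Longrightarrow> p y' = (\<Sum>y<N. q y * r y y')"
    and d: "\<And>y'. y' < N' \<Longrightarrow> \<delta>' y' = (\<Sum>y<N. \<delta> y * r y y')"
  shows "Jfi {0..<N'} p \<delta>' \<le> Jfi {0..<N} q \<delta>"
proof (cases "\<exists>y<N. \<delta> y \<noteq> 0 \<and> q y = 0")
  case True
  then obtain y0 where y0: "y0 < N" "\<delta> y0 \<noteq> 0" "q y0 = 0" by blast
  have "Jfi {0..<N} q \<delta> = \<infinity>" unfolding Jfi_def
    by (subst sum_Pinfty) (use y0 in auto)
  then show ?thesis by simp
next
  case False
  then have z: "\<And>y. y < N \<Longrightarrow> q y = 0 \<Longrightarrow> \<delta> y = 0" by blast
  have term_bound: "(if \<delta>' y' = 0 then 0 else if p y' = 0 then \<infinity> else ereal (\<delta>' y' ^ 2 / p y'))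
      \<le> ereal (\<Sum>y<N. \<delta> y ^ 2 / q y * r y y')" if y': "y' < N'" for y'
    unfolding p[OF y'] d[OF y']
    by (rule fisher_term_processed) (use q r[OF _ y'] z in auto)
  have "Jfi {0..<N'} p \<delta>' \<le> (\<Sum>y'<N'. ereal (\<Sum>y<N. \<delta> y ^ 2 / q y * r y y'))"
    unfolding Jfi_def atLeast0LessThan by (rule sum_mono) (use term_bound in auto)
  also have "\<dots> = ereal (\<Sum>y<N. \<delta> y ^ 2 / q y * (\<Sum>y'<N'. r y y'))"
    by (simp add: sum_distrib_left) (rule sum.swap)
  also have "\<dots> = ereal (\<Sum>y<N. \<delta> y ^ 2 / q y)" using r1 by simp
  also have "\<dots> = Jfi {0..<N} q \<delta>"
    unfolding Jfi_def atLeast0LessThan sum_ereal[symmetric] by (rule sum.cong[OF refl]) (use z in auto)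
  finally show ?thesis .
qed

section \<open>Operations preserving positivity\<close>

lemma sum_swap_pairs:
  "(\<Sum>u<a. \<Sum>v<b. \<Sum>x<c. \<Sum>x'<d. T u v x x') = (\<Sum>x<c. \<Sum>x'<d. \<Sum>u<a. \<Sum>v<b. (T u v x x' :: 'z::comm_monoid_add))"
proof -
  have "(\<Sum>u<a. \<Sum>v<b. \<Sum>x<c. \<Sum>x'<d. T u v x x') = (\<Sum>u<a. \<Sum>x<c. \<Sum>v<b. \<Sum>x'<d. T u v x x')"
    by (rule sum.cong[OF refl]) (rule sum.swap)
  also have "\<dots> = (\<Sum>u<a. \<Sum>x<c. \<Sum>x'<d. \<Sum>v<b. T u v x x')"
    by (rule sum.cong[OF refl], rule sum.cong[OF refl]) (rule sum.swap)
  also have "\<dots> = (\<Sum>x<c. \<Sum>u<a. \<Sum>x'<d. \<Sum>v<b. T u v x x')" by (rule sum.swap)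
  also have "\<dots> = (\<Sum>x<c. \<Sum>x'<d. \<Sum>u<a. \<Sum>v<b. T u v x x')"
    by (rule sum.cong[OF refl]) (rule sum.swap)
  finally show ?thesis .
qed

lemma sum_rotate3:
  "(\<Sum>x<a. \<Sum>y<b. \<Sum>z<c. T x y z) = (\<Sum>y<b. \<Sum>z<c. \<Sum>x<a. (T x y z :: 'z::comm_monoid_add))"
proof -
  have "(\<Sum>x<a. \<Sum>y<b. \<Sum>z<c. T x y z) = (\<Sum>y<b. \<Sum>x<a. \<Sum>z<c. T x y z)" by (rule sum.swap)
  also have "\<dots> = (\<Sum>y<b. \<Sum>z<c. \<Sum>x<a. T x y z)" by (rule sum.cong[OF refl]) (rule sum.swap)
  finally show ?thesis .
qed

text \<open>Congruence \<open>A \<mapsto> K A K\<^sup>*\<close> by an arbitrary (rectangular) matrix \<open>K\<close> preserves positivity,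
  since \<open>\<langle>f, K A K\<^sup>* f\<rangle> = \<langle>K\<^sup>* f, A K\<^sup>* f\<rangle>\<close>.\<close>
lemma sform_congruence:
  "sform d2 (\<lambda>u v. \<Sum>x<d1. \<Sum>x'<d1. K u x * A x x' * cnj (K v x')) f f
   = sform d1 A (\<lambda>x. \<Sum>u<d2. cnj (K u x) * f u) (\<lambda>x. \<Sum>u<d2. cnj (K u x) * f u)"
proof -
  have "sform d2 (\<lambda>u v. \<Sum>x<d1. \<Sum>x'<d1. K u x * A x x' * cnj (K v x')) f f
     = (\<Sum>u<d2. \<Sum>v<d2. \<Sum>x<d1. \<Sum>x'<d1. cnj (f u) * (K u x * A x x' * cnj (K v x')) * f v)"
    unfolding sform_def by (simp add: sum_distrib_left sum_distrib_right)
  also have "\<dots> = (\<Sum>x<d1. \<Sum>x'<d1. \<Sum>u<d2. \<Sum>v<d2. cnj (f u) * (K u x * A x x' * cnj (K v x')) * f v)"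
    by (rule sum_swap_pairs)
  also have "\<dots> = sform d1 A (\<lambda>x. \<Sum>u<d2. cnj (K u x) * f u) (\<lambda>x. \<Sum>u<d2. cnj (K u x) * f u)"
    unfolding sform_def cnj_sum
    by (intro sum.cong refl) (simp add: sum_distrib_left sum_distrib_right mult_ac)
  finally show ?thesis .
qed

lemma psd_form_congruence:
  "psd_form d1 A \<Longrightarrow> psd_form d2 (\<lambda>u v. \<Sum>x<d1. \<Sum>x'<d1. K u x * A x x' * cnj (K v x'))"
  unfolding psd_form_def sform_congruence by blast

lemma psd_form_sum: "(\<And>l. l < L \<Longrightarrow> psd_form d (A l)) \<Longrightarrow> psd_form d (\<lambda>u v. \<Sum>l<L. A l u v)"
proof -
  assume a: "\<And>l. l < L \<Longrightarrow> psd_form d (A l)"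
  have "sform d (\<lambda>u v. \<Sum>l<L. A l u v) f f = (\<Sum>u<d. \<Sum>v<d. \<Sum>l<L. cnj (f u) * A l u v * f v)" for f
    unfolding sform_def by (simp add: sum_distrib_left sum_distrib_right)
  also have "\<dots> f = (\<Sum>l<L. sform d (A l) f f)" for f
    unfolding sform_def by (subst sum.swap) (intro sum.cong refl, rule sum.swap)
  finally show ?thesis
    using a unfolding psd_form_def by (auto simp: Im_sum Re_sum intro: sum_nonneg)
qed

lemma psd_form_cong: "psd_form d A \<Longrightarrow> (\<And>u v. u < d \<Longrightarrow> v < d \<Longrightarrow> A u v = B u v) \<Longrightarrow> psd_form d B"
proof -
  assume a: "psd_form d A" and e: "\<And>u v. u < d \<Longrightarrow> v < d \<Longrightarrow> A u v = B u v"
  have "sform d A f f = sform d B f f" for f unfolding sform_def using e by (auto intro!: sum.cong)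
  then show ?thesis using a unfolding psd_form_def by simp
qed

section \<open>Channels\<close>

lemma sum_blocks: "(\<Sum>s<(a::nat)*(b::nat). f s) = (\<Sum>i<a. \<Sum>j<b. f (i*b+j)::'c::comm_monoid_add)"
proof -
  have "(\<Sum>s<a*b. f s) = (\<Sum>i<a. sum f {i*b..<i*b+b})" using sum.nat_group[of f b a] by simp
  also have "\<dots> = (\<Sum>i<a. \<Sum>j<b. f (i*b+j))"
  proof (rule sum.cong[OF refl])
    fix i
    have "sum f {0 + i*b..<b + i*b} = (\<Sum>j\<in>{0..<b}. f (j + i*b))" by (rule sum.shift_bounds_nat_ivl)
    then show "sum f {i*b..<i*b+b} = (\<Sum>j<b. f (i*b+j))" by (simp add: atLeast0LessThan add.commute)
  qed
  finally show ?thesis .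
qed

lemma block_index_less: "(i::nat) < a \<Longrightarrow> j < b \<Longrightarrow> i*b+j < a*b"
proof -
  assume "i < a" "j < b"
  then have "i*b + j < (i+1)*b" by simp
  also have "\<dots> \<le> a*b" using \<open>i < a\<close> by (intro mult_right_mono) auto
  finally show ?thesis .
qed

lemma channel_carrier: "channel n m \<Lambda> \<Longrightarrow> X \<in> carrier_mat n n \<Longrightarrow> \<Lambda> X \<in> carrier_mat m m"
  unfolding channel_def by blast
lemma channel_linear:
  "channel n m \<Lambda> \<Longrightarrow> X \<in> carrier_mat n n \<Longrightarrow> Y \<in> carrier_mat n n \<Longrightarrow> \<Lambda> (a \<cdot>\<^sub>m X + Y) = a \<cdot>\<^sub>m \<Lambda> X + \<Lambda> Y"
  unfolding channel_def by blast
lemma channel_trace: "channel n m \<Lambda> \<Longrightarrow> X \<in> carrier_mat n n \<Longrightarrow> mtrace (\<Lambda> X) = mtrace X"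
  unfolding channel_def by blast
lemma channel_cp: "channel n m \<Lambda> \<Longrightarrow> k > 0 \<Longrightarrow> psd (n*k) \<rho> \<Longrightarrow> psd (m*k) (tensor_id n m k \<Lambda> \<rho>)"
  unfolding channel_def by blast

definition mat_unit :: "nat \<Rightarrow> nat \<Rightarrow> nat \<Rightarrow> complex mat" where
  "mat_unit n i j = mat n n (\<lambda>(u,v). if u = i \<and> v = j then 1 else 0)"

lemma mat_unit_carrier: "mat_unit n i j \<in> carrier_mat n n"
  unfolding mat_unit_def by simp

lemma mtrace_mat_unit: "I < n \<Longrightarrow> mtrace (mat_unit n I J) = (if I = J then 1 else 0)"
proof -
  assume I: "I < n"
  have "mtrace (mat_unit n I J) = (\<Sum>i<n. if i = I then (if I = J then 1 else 0) else 0)"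
    unfolding mtrace_def mat_unit_def by (rule sum.cong) auto
  then show ?thesis using I by (simp add: sum.delta')
qed

lemma channel_zero:
  assumes ch: "channel n m \<Lambda>" and a: "a < m" and b: "b < m"
  shows "\<Lambda> (0\<^sub>m n n) $$ (a,b) = 0"
proof -
  have z: "0\<^sub>m n n \<in> carrier_mat n n" by simp
  have "\<Lambda> (1 \<cdot>\<^sub>m 0\<^sub>m n n + 0\<^sub>m n n) = 1 \<cdot>\<^sub>m \<Lambda> (0\<^sub>m n n) + \<Lambda> (0\<^sub>m n n)"
    by (rule channel_linear[OF ch z z])
  then have "\<Lambda> (0\<^sub>m n n) $$ (a,b) = (1 \<cdot>\<^sub>m \<Lambda> (0\<^sub>m n n) + \<Lambda> (0\<^sub>m n n)) $$ (a,b)" by simp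
  also have "\<dots> = \<Lambda> (0\<^sub>m n n) $$ (a,b) + \<Lambda> (0\<^sub>m n n) $$ (a,b)"
    using channel_carrier[OF ch z] a b by simp
  finally show ?thesis by simp
qed

text \<open>Choi expansion: a channel is determined entrywise by its values on matrix units.  The
  proof adds the entries of \<open>X\<close> one at a time (in row-major order) using linearity.\<close>
lemma channel_choi_expansion:
  assumes ch: "channel n m \<Lambda>" and X: "X \<in> carrier_mat n n" and a: "a < m" and b: "b < m"
  shows "\<Lambda> X $$ (a,b) = (\<Sum>i<n. \<Sum>j<n. X $$ (i,j) * \<Lambda> (mat_unit n i j) $$ (a,b))"
proof -
  define Xt where "Xt t = mat n n (\<lambda>(u,v). if u*n+v < t then X $$ (u,v) else 0)" for t
  have Xt: "Xt t \<in> carrier_mat n n" for t unfolding Xt_def by simp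
  have step: "Xt (Suc t) = X $$ (t div n, t mod n) \<cdot>\<^sub>m mat_unit n (t div n) (t mod n) + Xt t"
    if tn: "t < n*n" for t
  proof (rule eq_matI)
    fix u v assume "u < dim_row (X $$ (t div n, t mod n) \<cdot>\<^sub>m mat_unit n (t div n) (t mod n) + Xt t)"
      and "v < dim_col (X $$ (t div n, t mod n) \<cdot>\<^sub>m mat_unit n (t div n) (t mod n) + Xt t)"
    then have u: "u < n" and v: "v < n" unfolding mat_unit_def Xt_def by auto
    have "u*n+v = t \<longleftrightarrow> u = t div n \<and> v = t mod n" using v by auto
    then show "Xt (Suc t) $$ (u,v) = (X $$ (t div n, t mod n) \<cdot>\<^sub>m mat_unit n (t div n) (t mod n) + Xt t) $$ (u,v)"
      unfolding Xt_def mat_unit_def using u v by auto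
  qed (auto simp: Xt_def mat_unit_def)
  have partial: "\<Lambda> (Xt t) $$ (a,b) = (\<Sum>s<t. X $$ (s div n, s mod n) * \<Lambda> (mat_unit n (s div n) (s mod n)) $$ (a,b))"
    if "t \<le> n*n" for t
    using that
  proof (induction t)
    case 0
    have "Xt 0 = 0\<^sub>m n n" unfolding Xt_def by auto
    then show ?case using channel_zero[OF ch a b] by simp
  next
    case (Suc t)
    then have tn: "t < n*n" by simp
    have "\<Lambda> (Xt (Suc t)) = X $$ (t div n, t mod n) \<cdot>\<^sub>m \<Lambda> (mat_unit n (t div n) (t mod n)) + \<Lambda> (Xt t)"
      unfolding step[OF tn] by (rule channel_linear[OF ch mat_unit_carrier Xt])
    then have "\<Lambda> (Xt (Suc t)) $$ (a,b)
        = X $$ (t div n, t mod n) * \<Lambda> (mat_unit n (t div n) (t mod n)) $$ (a,b) + \<Lambda> (Xt t) $$ (a,b)"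
      using channel_carrier[OF ch mat_unit_carrier, of "t div n" "t mod n"] channel_carrier[OF ch Xt, of t] a b
      by (simp add: carrier_matD)
    then show ?case using Suc tn by simp
  qed
  have "Xt (n*n) = X"
    by (rule eq_matI) (use X block_index_less in \<open>auto simp: Xt_def\<close>)
  then have "\<Lambda> X $$ (a,b) = (\<Sum>s<n*n. X $$ (s div n, s mod n) * \<Lambda> (mat_unit n (s div n) (s mod n)) $$ (a,b))"
    using partial[of "n*n"] by simp
  also have "\<dots> = (\<Sum>i<n. \<Sum>j<n. X $$ (i,j) * \<Lambda> (mat_unit n i j) $$ (a,b))"
    unfolding sum_blocks by (intro sum.cong refl) simp
  finally show ?thesis .
qed

lemma tensor_id_entry:
  assumes ch: "channel n m \<Lambda>" and u: "u < m*k" and v: "v < m*k"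
  shows "tensor_id n m k \<Lambda> \<sigma> $$ (u,v)
    = (\<Sum>i<n. \<Sum>j<n. \<sigma> $$ (i*k + u mod k, j*k + v mod k) * \<Lambda> (mat_unit n i j) $$ (u div k, v div k))"
proof -
  have k: "k > 0" using u by (cases k) auto
  have a: "u div k < m" "v div k < m" using u v k by (auto simp: less_mult_imp_div_less)
  show ?thesis unfolding tensor_id_def using u v
    by (simp add: channel_choi_expansion[OF ch _ a])
qed

lemma tensor_id_trace:
  assumes ch: "channel n m \<Lambda>" and s: "\<sigma> \<in> carrier_mat (n*k) (n*k)"
  shows "mtrace (tensor_id n m k \<Lambda> \<sigma>) = mtrace \<sigma>"
proof -
  define C where "C I J a = \<Lambda> (mat_unit n I J) $$ (a,a)" for I J a
  have C: "(\<Sum>a<m. C I J a) = (if I = J then 1 else 0)" if "I < n" for I J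
    using channel_trace[OF ch mat_unit_carrier, of I J] channel_carrier[OF ch mat_unit_carrier, of I J]
      mtrace_mat_unit[OF that] unfolding C_def mtrace_def by simp
  have "mtrace (tensor_id n m k \<Lambda> \<sigma>) = (\<Sum>u<m*k. tensor_id n m k \<Lambda> \<sigma> $$ (u,u))"
    unfolding mtrace_def tensor_id_def by simp
  also have "\<dots> = (\<Sum>a<m. \<Sum>r<k. \<Sum>I<n. \<Sum>J<n. \<sigma> $$ (I*k + r, J*k + r) * C I J a)"
    unfolding sum_blocks
  proof (intro sum.cong refl)
    fix a r assume "a \<in> {..<m}" and r: "r \<in> {..<k}"
    then have "a*k+r < m*k" by (auto intro: block_index_less)
    then show "tensor_id n m k \<Lambda> \<sigma> $$ (a*k+r, a*k+r) = (\<Sum>I<n. \<Sum>J<n. \<sigma> $$ (I*k + r, J*k + r) * C I J a)"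
      using r by (simp add: tensor_id_entry[OF ch] C_def)
  qed
  also have "\<dots> = (\<Sum>r<k. \<Sum>I<n. \<Sum>a<m. \<Sum>J<n. \<sigma> $$ (I*k + r, J*k + r) * C I J a)"
    by (rule sum_rotate3)
  also have "\<dots> = (\<Sum>r<k. \<Sum>I<n. \<Sum>J<n. \<sigma> $$ (I*k + r, J*k + r) * (\<Sum>a<m. C I J a))"
    by (rule sum.cong[OF refl], rule sum.cong[OF refl]) (subst sum.swap, simp add: sum_distrib_left)
  also have "\<dots> = (\<Sum>r<k. \<Sum>I<n. \<sigma> $$ (I*k + r, I*k + r))"
    by (intro sum.cong refl) (simp add: C if_distrib sum.delta' cong: if_cong)
  also have "\<dots> = (\<Sum>I<n. \<Sum>r<k. \<sigma> $$ (I*k + r, I*k + r))" by (rule sum.swap)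
  also have "\<dots> = mtrace \<sigma>" unfolding mtrace_def using s sum_blocks[of "\<lambda>x. \<sigma> $$ (x,x)" n k] by simp
  finally show ?thesis .
qed

subsection \<open>Kraus maps\<close>

definition kraus_map :: "nat \<Rightarrow> nat \<Rightarrow> nat \<Rightarrow> (nat \<Rightarrow> nat \<Rightarrow> nat \<Rightarrow> complex) \<Rightarrow> complex mat \<Rightarrow> complex mat" where
  "kraus_map L n m K X = mat m m (\<lambda>(a,b). \<Sum>l<L. \<Sum>I<n. \<Sum>J<n. K l a I * X $$ (I,J) * cnj (K l b J))"

lemma kraus_map_linear:
  assumes X: "X \<in> carrier_mat n n" and Y: "Y \<in> carrier_mat n n"
  shows "kraus_map L n m K (c \<cdot>\<^sub>m X + Y) = c \<cdot>\<^sub>m kraus_map L n m K X + kraus_map L n m K Y"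
proof (rule eq_matI)
  fix a b assume "a < dim_row (c \<cdot>\<^sub>m kraus_map L n m K X + kraus_map L n m K Y)"
    and "b < dim_col (c \<cdot>\<^sub>m kraus_map L n m K X + kraus_map L n m K Y)"
  then have a: "a < m" and b: "b < m" unfolding kraus_map_def by auto
  have "(\<Sum>l<L. \<Sum>I<n. \<Sum>J<n. K l a I * (c \<cdot>\<^sub>m X + Y) $$ (I,J) * cnj (K l b J))
      = (\<Sum>l<L. \<Sum>I<n. \<Sum>J<n. c * (K l a I * X $$ (I,J) * cnj (K l b J)) + K l a I * Y $$ (I,J) * cnj (K l b J))"
    by (intro sum.cong refl) (use X Y in \<open>auto simp: algebra_simps\<close>)
  also have "\<dots> = c * (\<Sum>l<L. \<Sum>I<n. \<Sum>J<n. K l a I * X $$ (I,J) * cnj (K l b J))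
      + (\<Sum>l<L. \<Sum>I<n. \<Sum>J<n. K l a I * Y $$ (I,J) * cnj (K l b J))"
    by (simp add: sum.distrib sum_distrib_left)
  finally show "kraus_map L n m K (c \<cdot>\<^sub>m X + Y) $$ (a,b) = (c \<cdot>\<^sub>m kraus_map L n m K X + kraus_map L n m K Y) $$ (a,b)"
    unfolding kraus_map_def using a b by simp
qed (auto simp: kraus_map_def)

lemma kraus_map_trace:
  assumes TP: "\<And>I J. I < n \<Longrightarrow> J < n \<Longrightarrow> (\<Sum>l<L. \<Sum>a<m. K l a I * cnj (K l a J)) = (if I = J then 1 else 0)"
    and X: "X \<in> carrier_mat n n"
  shows "mtrace (kraus_map L n m K X) = mtrace X"
proof -
  have "mtrace (kraus_map L n m K X) = (\<Sum>a<m. \<Sum>l<L. \<Sum>I<n. \<Sum>J<n. K l a I * X $$ (I,J) * cnj (K l a J))"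
    unfolding mtrace_def kraus_map_def by simp
  also have "\<dots> = (\<Sum>I<n. \<Sum>J<n. \<Sum>a<m. \<Sum>l<L. K l a I * X $$ (I,J) * cnj (K l a J))"
    by (rule sum_swap_pairs)
  also have "\<dots> = (\<Sum>I<n. \<Sum>J<n. X $$ (I,J) * (\<Sum>l<L. \<Sum>a<m. K l a I * cnj (K l a J)))"
    by (intro sum.cong refl) (subst sum.swap, simp add: sum_distrib_left mult_ac)
  also have "\<dots> = (\<Sum>I<n. X $$ (I,I))"
    by (intro sum.cong refl) (simp add: TP if_distrib sum.delta cong: if_cong)
  also have "\<dots> = mtrace X" unfolding mtrace_def using X by simp
  finally show ?thesis .
qed

lemma sum_residue_pick:
  fixes n k u :: nat
  assumes k: "k > 0"
  shows "(\<Sum>x<n*k. (if x mod k = u mod k then G (x div k) else 0) * H x) = (\<Sum>I<n. G I * (H (I*k + u mod k) :: complex))"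
proof -
  have "(\<Sum>x<n*k. (if x mod k = u mod k then G (x div k) else 0) * H x)
     = (\<Sum>I<n. \<Sum>r<k. (if r = u mod k then G I * H (I*k + r) else 0))"
    unfolding sum_blocks by (rule sum.cong[OF refl], rule sum.cong[OF refl]) auto
  also have "\<dots> = (\<Sum>I<n. G I * H (I*k + u mod k))" using k by (simp add: sum.delta')
  finally show ?thesis .
qed

text \<open>Complete positivity: \<open>(\<Lambda> \<otimes> id\<^sub>k)(\<rho>)\<close> is the congruence sum with Kraus operators
  \<open>K\<^sub>l \<otimes> 1\<^sub>k\<close>, hence positive.\<close>
lemma kraus_map_tensor_psd:
  assumes k: "k > 0" and rho: "psd (n*k) \<rho>"
  shows "psd (m*k) (tensor_id n m k (kraus_map L n m K) \<rho>)"
proof -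
  define K' where "K' l u x = (if x mod k = u mod k then K l (u div k) (x div k) else 0)" for l u x
  have R: "psd_form (n*k) (\<lambda>i j. \<rho> $$ (i,j))" using rho unfolding psd_iff_psd_form by blast
  have F: "psd_form (m*k) (\<lambda>u v. \<Sum>l<L. \<Sum>x<n*k. \<Sum>x'<n*k. K' l u x * \<rho> $$ (x,x') * cnj (K' l v x'))"
    by (rule psd_form_sum) (rule psd_form_congruence[OF R])
  have entry: "(\<Sum>x<n*k. \<Sum>x'<n*k. K' l u x * \<rho> $$ (x,x') * cnj (K' l v x'))
      = (\<Sum>I<n. \<Sum>J<n. K l (u div k) I * \<rho> $$ (I*k + u mod k, J*k + v mod k) * cnj (K l (v div k) J))" for l u v
  proof -
    have "(\<Sum>x<n*k. \<Sum>x'<n*k. K' l u x * \<rho> $$ (x,x') * cnj (K' l v x'))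
        = (\<Sum>x<n*k. (if x mod k = u mod k then K l (u div k) (x div k) else 0)
            * (\<Sum>x'<n*k. (if x' mod k = v mod k then cnj (K l (v div k) (x' div k)) else 0) * \<rho> $$ (x,x')))"
    proof -
      have ck: "cnj (K' l v x') = (if x' mod k = v mod k then cnj (K l (v div k) (x' div k)) else 0)" for x'
        unfolding K'_def by simp
      have "(\<Sum>x<n*k. \<Sum>x'<n*k. K' l u x * \<rho> $$ (x,x') * cnj (K' l v x'))
          = (\<Sum>x<n*k. K' l u x * (\<Sum>x'<n*k. cnj (K' l v x') * \<rho> $$ (x,x')))"
        by (rule sum.cong[OF refl]) (simp add: sum_distrib_left mult_ac)
      then show ?thesis unfolding ck by (simp add: K'_def)
    qed
    also have "\<dots> = (\<Sum>I<n. K l (u div k) I * (\<Sum>J<n. cnj (K l (v div k) J) * \<rho> $$ (I*k + u mod k, J*k + v mod k)))"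
    proof -
      have inner: "(\<Sum>x'<n*k. (if x' mod k = v mod k then cnj (K l (v div k) (x' div k)) else 0) * \<rho> $$ (x,x'))
          = (\<Sum>J<n. cnj (K l (v div k) J) * \<rho> $$ (x, J*k + v mod k))" for x
        by (rule sum_residue_pick[OF k, where u=v and G="\<lambda>J. cnj (K l (v div k) J)" and H="\<lambda>x'. \<rho> $$ (x,x')"])
      show ?thesis unfolding inner
        by (rule sum_residue_pick[OF k, where u=u and G="\<lambda>I. K l (u div k) I"
              and H="\<lambda>x. \<Sum>J<n. cnj (K l (v div k) J) * \<rho> $$ (x, J*k + v mod k)"])
    qed
    finally show ?thesis by (simp add: sum_distrib_left mult_ac)
  qed
  have "psd_form (m*k) (\<lambda>u v. tensor_id n m k (kraus_map L n m K) \<rho> $$ (u,v))"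
  proof (rule psd_form_cong[OF F])
    fix u v assume u: "u < m*k" and v: "v < m*k"
    have "u div k < m" "v div k < m" using u v k by (auto simp: less_mult_imp_div_less)
    then show "(\<Sum>l<L. \<Sum>x<n*k. \<Sum>x'<n*k. K' l u x * \<rho> $$ (x,x') * cnj (K' l v x'))
        = tensor_id n m k (kraus_map L n m K) \<rho> $$ (u,v)"
      unfolding entry tensor_id_def kraus_map_def using u v by simp
  qed
  moreover have "tensor_id n m k (kraus_map L n m K) \<rho> \<in> carrier_mat (m*k) (m*k)"
    unfolding tensor_id_def by simp
  ultimately show ?thesis unfolding psd_iff_psd_form by blast
qed

theorem kraus_map_channel:
  assumes "\<And>I J. I < n \<Longrightarrow> J < n \<Longrightarrow> (\<Sum>l<L. \<Sum>a<m. K l a I * cnj (K l a J)) = (if I = J then 1 else 0)"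
  shows "channel n m (kraus_map L n m K)"
  unfolding channel_def
  using kraus_map_linear kraus_map_trace[OF assms] kraus_map_tensor_psd
  by (auto simp: kraus_map_def)

section \<open>Every tangent simulation bounds every measurement: \<open>Gmin \<le> Gmax\<close>\<close>

text \<open>The state \<open>\<rho> \<otimes> |y\<rangle>\<langle>y|\<close> on \<open>H\<^sub>i\<^sub>n \<otimes> \<complex>\<^sup>N \<otimes> K\<close> (with \<open>dim H\<^sub>i\<^sub>n = n\<close>,
  \<open>dim K = k\<close>), where \<open>\<rho>\<close> lives on \<open>H\<^sub>i\<^sub>n \<otimes> K\<close>: the probe \<open>\<rho>\<close> tagged with label \<open>y\<close>.\<close>
definition label_state :: "nat \<Rightarrow> nat \<Rightarrow> nat \<Rightarrow> nat \<Rightarrow> complex mat \<Rightarrow> complex mat" where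
  "label_state n N k y \<rho> = mat (n*N*k) (n*N*k) (\<lambda>(u,v). if (u div k) mod N = y \<and> (v div k) mod N = y
      then \<rho> $$ (((u div k) div N)*k + u mod k, ((v div k) div N)*k + v mod k) else 0)"

lemma label_state_carrier: "label_state n N k y \<rho> \<in> carrier_mat (n*N*k) (n*N*k)"
  unfolding label_state_def by simp

lemma label_state_entry:
  assumes "I < n*N" "J < n*N" "r < k" "s < k"
  shows "label_state n N k y \<rho> $$ (I*k+r, J*k+s)
    = (if I mod N = y \<and> J mod N = y then \<rho> $$ ((I div N)*k + r, (J div N)*k + s) else 0)"
proof -
  have "I*k+r < n*N*k" "J*k+s < n*N*k" using assms block_index_less by auto
  then show ?thesis unfolding label_state_def using assms by simp
qed

lemma label_embedding_iff:
  fixes x y N k u :: nat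
  assumes "y < N" "k > 0"
  shows "(((x div k)*N + y)*k + x mod k = u) \<longleftrightarrow> ((u div k) mod N = y \<and> x = ((u div k) div N)*k + u mod k)"
proof
  assume h: "((x div k)*N + y)*k + x mod k = u"
  have "x mod k < k" using assms(2) by simp
  then have "u div k = (x div k)*N + y" "u mod k = x mod k" using h by auto
  then show "(u div k) mod N = y \<and> x = ((u div k) div N)*k + u mod k" using assms by auto
next
  assume h: "(u div k) mod N = y \<and> x = ((u div k) div N)*k + u mod k"
  then have "x div k = (u div k) div N" "x mod k = u mod k" using assms by auto
  then show "((x div k)*N + y)*k + x mod k = u" using h by (metis div_mult_mod_eq)
qed

lemma sum_pick_index:
  assumes "x0 < (d::nat)"
  shows "(\<Sum>x<d. (if x = x0 \<and> P then 1 else 0) * F x) = (if P then F x0 else (0::complex))"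
proof -
  have "(\<Sum>x<d. (if x = x0 \<and> P then 1 else 0) * F x) = (\<Sum>x<d. if x = x0 then (if P then F x else 0) else 0)"
    by (rule sum.cong) auto
  also have "\<dots> = (if P then F x0 else 0)" using assms by (simp add: sum.delta')
  finally show ?thesis .
qed

text \<open>Tagging is a congruence by the isometric embedding, so it preserves positivity.\<close>
lemma label_state_psd:
  assumes rho: "psd (n*k) \<rho>" and y: "y < N" and k: "k > 0"
  shows "psd (n*N*k) (label_state n N k y \<rho>)"
proof -
  define K where "K u x = (if ((x div k)*N + y)*k + x mod k = u then 1 else (0::complex))" for u x
  have R: "psd_form (n*k) (\<lambda>i j. \<rho> $$ (i,j))" using rho unfolding psd_iff_psd_form by blast
  have F: "psd_form (n*N*k) (\<lambda>u v. \<Sum>x<n*k. \<Sum>x'<n*k. K u x * \<rho> $$ (x,x') * cnj (K v x'))"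
    by (rule psd_form_congruence[OF R])
  have "psd_form (n*N*k) (\<lambda>u v. label_state n N k y \<rho> $$ (u,v))"
  proof (rule psd_form_cong[OF F])
    fix u v assume u: "u < n*N*k" and v: "v < n*N*k"
    define u0 where "u0 = ((u div k) div N)*k + u mod k"
    define v0 where "v0 = ((v div k) div N)*k + v mod k"
    have lt: "(u div k) div N < n" "(v div k) div N < n"
      using u v k y by (auto simp: less_mult_imp_div_less div_mult2_eq[symmetric] mult.commute mult.left_commute)
    have u0: "u0 < n*k" unfolding u0_def using lt k by (intro block_index_less) auto
    have v0: "v0 < n*k" unfolding v0_def using lt k by (intro block_index_less) auto
    have Ku: "K u x = (if x = u0 \<and> (u div k) mod N = y then 1 else 0)" for x
      unfolding K_def u0_def label_embedding_iff[OF y k] by auto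
    have Kv: "cnj (K v x) = (if x = v0 \<and> (v div k) mod N = y then 1 else 0)" for x
      unfolding K_def v0_def label_embedding_iff[OF y k] by auto
    have "(\<Sum>x<n*k. \<Sum>x'<n*k. K u x * \<rho> $$ (x,x') * cnj (K v x'))
        = (\<Sum>x<n*k. (if x = u0 \<and> (u div k) mod N = y then 1 else 0) * (\<Sum>x'<n*k. \<rho> $$ (x,x') * cnj (K v x')))"
      unfolding Ku by (simp add: sum_distrib_left mult.assoc)
    also have "\<dots> = (if (u div k) mod N = y
        then (\<Sum>x'<n*k. (if x' = v0 \<and> (v div k) mod N = y then 1 else 0) * \<rho> $$ (u0,x')) else 0)"
      unfolding sum_pick_index[OF u0] Kv by (simp add: mult.commute)
    also have "\<dots> = label_state n N k y \<rho> $$ (u,v)"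
      unfolding sum_pick_index[OF v0] label_state_def using u v by (simp add: u0_def v0_def)
    finally show "(\<Sum>x<n*k. \<Sum>x'<n*k. K u x * \<rho> $$ (x,x') * cnj (K v x')) = label_state n N k y \<rho> $$ (u,v)" .
  qed
  then show ?thesis unfolding psd_iff_psd_form using label_state_carrier by blast
qed

lemma label_state_trace:
  assumes rho: "\<rho> \<in> carrier_mat (n*k) (n*k)" and y: "y < N"
  shows "mtrace (label_state n N k y \<rho>) = mtrace \<rho>"
proof -
  have "mtrace (label_state n N k y \<rho>) = (\<Sum>I<n*N. \<Sum>r<k. label_state n N k y \<rho> $$ (I*k+r, I*k+r))"
    using sum_blocks[of "\<lambda>u. label_state n N k y \<rho> $$ (u,u)" "n*N" k]
    unfolding mtrace_def by (simp add: label_state_def)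
  also have "\<dots> = (\<Sum>I<n*N. \<Sum>r<k. if I mod N = y then \<rho> $$ ((I div N)*k + r, (I div N)*k + r) else 0)"
    by (rule sum.cong[OF refl], rule sum.cong[OF refl]) (simp add: label_state_entry)
  also have "\<dots> = (\<Sum>i<n. \<Sum>c<N. \<Sum>r<k. if c = y then \<rho> $$ (i*k + r, i*k + r) else 0)"
    unfolding sum_blocks[of _ n N]
  proof (rule sum.cong[OF refl], rule sum.cong[OF refl])
    fix i c assume "c \<in> {..<N}"
    then have e: "(i*N + c) div N = i" "(i*N + c) mod N = c" by simp_all
    show "(\<Sum>r<k. if (i*N + c) mod N = y then \<rho> $$ ((i*N + c) div N * k + r, (i*N + c) div N * k + r) else 0)
        = (\<Sum>r<k. if c = y then \<rho> $$ (i*k + r, i*k + r) else 0)" unfolding e ..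
  qed
  also have "\<dots> = (\<Sum>i<n. \<Sum>r<k. \<rho> $$ (i*k + r, i*k + r))"
  proof (rule sum.cong[OF refl])
    fix i
    have "(\<Sum>c<N. \<Sum>r<k. if c = y then \<rho> $$ (i*k + r, i*k + r) else 0)
        = (\<Sum>c<N. if c = y then (\<Sum>r<k. \<rho> $$ (i*k + r, i*k + r)) else 0)"
      by (rule sum.cong[OF refl]) simp
    then show "(\<Sum>c<N. \<Sum>r<k. if c = y then \<rho> $$ (i*k + r, i*k + r) else 0) = (\<Sum>r<k. \<rho> $$ (i*k + r, i*k + r))"
      using y by (simp add: sum.delta')
  qed
  also have "\<dots> = mtrace \<rho>" unfolding mtrace_def using rho sum_blocks[of "\<lambda>x. \<rho> $$ (x,x)" n k] by simp
  finally show ?thesis .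
qed

lemma kron_entry:
  assumes A: "A \<in> carrier_mat n n" and D: "D \<in> carrier_mat N N" and I: "I < n*N" and J: "J < n*N"
  shows "kron A D $$ (I,J) = A $$ (I div N, J div N) * D $$ (I mod N, J mod N)"
  unfolding kron_def using A D I J by auto

lemma kron_carrier: "A \<in> carrier_mat n n \<Longrightarrow> D \<in> carrier_mat N N \<Longrightarrow> kron A D \<in> carrier_mat (n*N) (n*N)"
  unfolding kron_def by auto

lemma diag_op_entry: "i < N \<Longrightarrow> j < N \<Longrightarrow> diag_op N f $$ (i,j) = (if i = j then complex_of_real (f i) else 0)"
  unfolding diag_op_def by simp

lemma diag_op_carrier: "diag_op N f \<in> carrier_mat N N"
  unfolding diag_op_def by simp

lemma simulation_tensor_decomposition:
  assumes ch: "channel (n*N) m \<Lambda>" and N: "N > 0"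
    and sim: "\<forall>X\<in>carrier_mat n n. \<Psi> X = \<Lambda> (kron X (diag_op N f))"
    and u: "u < m*k" and v: "v < m*k"
  shows "tensor_id n m k \<Psi> \<rho> $$ (u,v)
    = (\<Sum>y<N. complex_of_real (f y) * tensor_id (n*N) m k \<Lambda> (label_state n N k y \<rho>) $$ (u,v))"
proof -
  have k: "k > 0" using u by (cases k) auto
  define ru where "ru = u mod k"
  define rv where "rv = v mod k"
  have rr: "ru < k" "rv < k" using k unfolding ru_def rv_def by auto
  define A where "A = mat n n (\<lambda>(i,j). \<rho> $$ (i*k + ru, j*k + rv))"
  have Ac: "A \<in> carrier_mat n n" unfolding A_def by simp
  define C where "C I J = \<Lambda> (mat_unit (n*N) I J) $$ (u div k, v div k)" for I J
  define R where "R I J = \<rho> $$ ((I div N)*k + ru, (J div N)*k + rv)" for I J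
  define F where "F I J = (if I mod N = J mod N then complex_of_real (f (I mod N)) else 0)" for I J
  have F: "F I J = (\<Sum>y<N. complex_of_real (f y) * (if I mod N = y \<and> J mod N = y then 1 else 0))" for I J
  proof -
    have "(\<Sum>y<N. complex_of_real (f y) * (if I mod N = y \<and> J mod N = y then 1 else 0))
        = (\<Sum>y<N. if y = I mod N then (if I mod N = J mod N then complex_of_real (f y) else 0) else 0)"
      by (rule sum.cong) auto
    then show ?thesis using N by (simp add: F_def sum.delta')
  qed
  have ab: "u div k < m" "v div k < m" using u v k by (auto simp: less_mult_imp_div_less)
  have "tensor_id n m k \<Psi> \<rho> $$ (u,v) = \<Lambda> (kron A (diag_op N f)) $$ (u div k, v div k)"
    unfolding tensor_id_def A_def ru_def rv_def using u v sim Ac by (simp add: A_def)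
  also have "\<dots> = (\<Sum>I<n*N. \<Sum>J<n*N. F I J * R I J * C I J)"
    unfolding channel_choi_expansion[OF ch kron_carrier[OF Ac diag_op_carrier] ab] C_def[symmetric]
  proof (rule sum.cong[OF refl], rule sum.cong[OF refl])
    fix I J assume I: "I \<in> {..<n*N}" and J: "J \<in> {..<n*N}"
    have lt: "I div N < n" "J div N < n" "I mod N < N" "J mod N < N"
      using I J N by (auto simp: less_mult_imp_div_less)
    have "kron A (diag_op N f) $$ (I,J) = A $$ (I div N, J div N) * diag_op N f $$ (I mod N, J mod N)"
      using I J by (intro kron_entry[OF Ac diag_op_carrier]) auto
    then show "kron A (diag_op N f) $$ (I,J) * C I J = F I J * R I J * C I J"
      using lt by (simp add: diag_op_entry A_def R_def F_def)
  qed
  also have "\<dots> = (\<Sum>I<n*N. \<Sum>J<n*N. \<Sum>y<N. complex_of_real (f y)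
      * ((if I mod N = y \<and> J mod N = y then R I J else 0) * C I J))"
    unfolding F sum_distrib_right by (intro sum.cong refl) (simp add: mult_ac)
  also have "\<dots> = (\<Sum>y<N. \<Sum>I<n*N. \<Sum>J<n*N. complex_of_real (f y)
      * ((if I mod N = y \<and> J mod N = y then R I J else 0) * C I J))"
    by (rule sum_rotate3[symmetric])
  also have "\<dots> = (\<Sum>y<N. complex_of_real (f y) * tensor_id (n*N) m k \<Lambda> (label_state n N k y \<rho>) $$ (u,v))"
    unfolding tensor_id_entry[OF ch u v] C_def
    by (rule sum.cong[OF refl]) (simp add: sum_distrib_left, intro sum.cong refl,
        simp add: label_state_entry k R_def ru_def rv_def)
  finally show ?thesis .
qed

lemma povm_trace_sum:
  assumes M: "povm d N M" and T: "T \<in> carrier_mat d d"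
  shows "(\<Sum>y<N. mtrace (T * M y)) = mtrace T"
proof -
  have Mc: "M y \<in> carrier_mat d d" if "y < N" for y using M that unfolding povm_def psd_def by auto
  have Msum: "(\<Sum>y<N. M y $$ (j,i)) = (if j = i then 1 else 0)" if "i < d" "j < d" for i j
    using M that unfolding povm_def by simp
  have "(\<Sum>y<N. mtrace (T * M y)) = (\<Sum>y<N. \<Sum>i<d. \<Sum>j<d. T $$ (i,j) * M y $$ (j,i))"
    by (intro sum.cong refl) (simp add: mtrace_mult[OF T Mc] trace_prod_def)
  also have "\<dots> = (\<Sum>i<d. \<Sum>j<d. \<Sum>y<N. T $$ (i,j) * M y $$ (j,i))"
    by (rule sum_rotate3)
  also have "\<dots> = (\<Sum>i<d. \<Sum>j<d. T $$ (i,j) * (\<Sum>y<N. M y $$ (j,i)))"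
    by (simp add: sum_distrib_left)
  also have "\<dots> = (\<Sum>i<d. T $$ (i,i))"
    by (intro sum.cong refl) (simp add: Msum if_distrib sum.delta' cong: if_cong)
  also have "\<dots> = mtrace T" unfolding mtrace_def using T by simp
  finally show ?thesis .
qed

text \<open>Data processing through a simulation: measuring \<open>(\<Phi> \<otimes> id)(\<rho>)\<close> and \<open>(\<Delta> \<otimes> id)(\<rho>)\<close>
  yields the image of \<open>(q, \<delta>)\<close> under the stochastic matrix
  \<open>r(y,y') = tr((\<Lambda> \<otimes> id)(\<rho> \<otimes> |y\<rangle>\<langle>y|) M\<^sub>y\<^sub>')\<close>, so its information is at most \<open>J\<^sub>q(\<delta>)\<close>.\<close>
theorem simulation_data_processing:
  assumes ch: "channel (n*N) m \<Lambda>"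
    and q: "\<forall>y<N. q y \<ge> 0" and q1: "(\<Sum>y<N. q y) = 1"
    and sim: "\<forall>X\<in>carrier_mat n n. \<Phi> X = \<Lambda> (kron X (diag_op N q)) \<and> \<Delta> X = \<Lambda> (kron X (diag_op N \<delta>))"
    and k: "k > 0" and rho: "density (n*k) \<rho>" and M: "povm (m*k) N' M"
  shows "Jfi {0..<N'} (\<lambda>y. Re (mtrace (tensor_id n m k \<Phi> \<rho> * M y))) (\<lambda>y. Re (mtrace (tensor_id n m k \<Delta> \<rho> * M y)))
         \<le> Jfi {0..<N} q \<delta>"
proof -
  have N: "N > 0" using q1 by (cases N) auto
  define T where "T y = tensor_id (n*N) m k \<Lambda> (label_state n N k y \<rho>)" for y
  define r where "r y y' = Re (mtrace (T y * M y'))" for y y'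
  have rhop: "psd (n*k) \<rho>" and rho1: "mtrace \<rho> = 1" using rho unfolding density_def by auto
  have rhoc: "\<rho> \<in> carrier_mat (n*k) (n*k)" using rhop unfolding psd_def by auto
  have Tc: "T y \<in> carrier_mat (m*k) (m*k)" for y unfolding T_def tensor_id_def by simp
  have Mp: "psd (m*k) (M y')" if "y' < N'" for y' using M that unfolding povm_def by auto
  have Mc: "M y' \<in> carrier_mat (m*k) (m*k)" if "y' < N'" for y' using Mp[OF that] unfolding psd_def by auto
  have r0: "r y y' \<ge> 0" if "y < N" "y' < N'" for y y'
    unfolding r_def T_def
    by (rule psd_trace_mult_nonneg[OF channel_cp[OF ch k label_state_psd[OF rhop that(1) k]] Mp[OF that(2)]])
  have r1: "(\<Sum>y'<N'. r y y') = 1" if y: "y < N" for y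
  proof -
    have "mtrace (T y) = 1"
      unfolding T_def tensor_id_trace[OF ch label_state_carrier] label_state_trace[OF rhoc y] rho1 ..
    then show ?thesis unfolding r_def Re_sum[symmetric] povm_trace_sum[OF M Tc] by simp
  qed
  have statistics: "Re (mtrace (tensor_id n m k \<Psi> \<rho> * M y')) = (\<Sum>y<N. f y * r y y')"
    if y': "y' < N'" and sim_f: "\<forall>X\<in>carrier_mat n n. \<Psi> X = \<Lambda> (kron X (diag_op N f))" for y' \<Psi> f
  proof -
    have Pc: "tensor_id n m k \<Psi> \<rho> \<in> carrier_mat (m*k) (m*k)" unfolding tensor_id_def by simp
    have "mtrace (tensor_id n m k \<Psi> \<rho> * M y')
        = (\<Sum>i<m*k. \<Sum>j<m*k. \<Sum>y<N. complex_of_real (f y) * (T y $$ (i,j) * M y' $$ (j,i)))"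
      unfolding mtrace_mult[OF Pc Mc[OF y']] trace_prod_def T_def
      by (intro sum.cong refl) (simp add: simulation_tensor_decomposition[OF ch N sim_f] sum_distrib_right mult.assoc)
    also have "\<dots> = (\<Sum>y<N. \<Sum>i<m*k. \<Sum>j<m*k. complex_of_real (f y) * (T y $$ (i,j) * M y' $$ (j,i)))"
      by (rule sum_rotate3[symmetric])
    also have "\<dots> = (\<Sum>y<N. complex_of_real (f y) * mtrace (T y * M y'))"
      by (simp add: mtrace_mult[OF Tc Mc[OF y']] trace_prod_def sum_distrib_left)
    finally show ?thesis unfolding r_def by (simp add: Re_sum)
  qed
  show ?thesis
    by (rule fisher_data_processing[of N q N' r])
      (use q r0 r1 sim statistics[of _ \<Phi> q] statistics[of _ \<Delta> \<delta>] in auto)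
qed

theorem Gmin_le_Gmax: "Gmin n m \<Phi> \<Delta> \<le> Gmax n m \<Phi> \<Delta>"
  unfolding Gmin_def Gmax_def
  by (rule Sup_least, rule Inf_greatest, clarify) (rule simulation_data_processing; assumption)

section \<open>Pauli channels\<close>

text \<open>Entries of the Pauli matrices \<open>\<sigma>\<^sub>0 = 1, \<sigma>\<^sub>1 = X, \<sigma>\<^sub>2 = Y, \<sigma>\<^sub>3 = Z\<close>.\<close>
definition pauli :: "nat \<Rightarrow> nat \<Rightarrow> nat \<Rightarrow> complex" where
  "pauli l a b = (if l = 0 then (if a = b then 1 else 0)
    else if l = 1 then (if a \<noteq> b then 1 else 0)
    else if l = 2 then (if a = 0 \<and> b = 1 then - \<i> else if a = 1 \<and> b = 0 then \<i> else 0)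
    else (if a = b then (if a = 0 then 1 else -1) else 0))"

lemma sum_lt2: "(\<Sum>a<2. f a) = f 0 + f (1::nat)" by (simp add: eval_nat_numeral)
lemma sum_lt4: "(\<Sum>a<4. f a) = f 0 + f 1 + f 2 + f (3::nat)" by (simp add: eval_nat_numeral)
lemma less_2_cases: "(a::nat) < 2 \<longleftrightarrow> a = 0 \<or> a = 1" by auto
lemma less_4_cases: "(a::nat) < 4 \<longleftrightarrow> a = 0 \<or> a = 1 \<or> a = 2 \<or> a = 3" by auto

lemma pauli_hermitian: "l < 4 \<Longrightarrow> i < 2 \<Longrightarrow> j < 2 \<Longrightarrow> cnj (pauli l i j) = pauli l j i"
  unfolding less_4_cases less_2_cases by (elim disjE) (simp_all add: pauli_def)

lemma pauli_unitary: "l < 4 \<Longrightarrow> i < 2 \<Longrightarrow> j < 2 \<Longrightarrow> (\<Sum>a<2. pauli l a i * cnj (pauli l a j)) = (if i = j then 1 else 0)"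
  unfolding less_4_cases less_2_cases by (elim disjE) (simp_all add: sum_lt2 pauli_def)

lemma pauli_matrices:
  "i < 2 \<Longrightarrow> j < 2 \<Longrightarrow> pauliX $$ (i,j) = pauli 1 i j \<and> pauliY $$ (i,j) = pauli 2 i j \<and> pauliZ $$ (i,j) = pauli 3 i j"
  unfolding less_2_cases
  by (elim disjE) (simp_all add: pauliX_def pauliY_def pauliZ_def mat_of_rows_list_def pauli_def)

lemma pauli_carrier: "pauliX \<in> carrier_mat 2 2" "pauliY \<in> carrier_mat 2 2" "pauliZ \<in> carrier_mat 2 2"
  by (simp_all add: pauliX_def pauliY_def pauliZ_def mat_of_rows_list_def numeral_2_eq_2)

lemma conjugation_entry:
  assumes P: "P \<in> carrier_mat 2 2" and X: "X \<in> carrier_mat 2 2" and a: "a < 2" and b: "b < 2"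
  shows "(P * X * P) $$ (a,b) = (\<Sum>i<2. \<Sum>j<2. P $$ (a,i) * X $$ (i,j) * P $$ (j,b))"
  using P X a b by (simp add: scalar_prod_def sum_lt2 atLeast0LessThan algebra_simps)

lemma pauli_map_entry:
  assumes X: "X \<in> carrier_mat 2 2" and a: "a < 2" and b: "b < 2"
  shows "pauli_map w x y z X $$ (a,b)
    = (\<Sum>l<4. complex_of_real ([w,x,y,z] ! l) * (\<Sum>i<2. \<Sum>j<2. pauli l a i * X $$ (i,j) * pauli l j b))"
proof -
  define S where "S l = (\<Sum>i<2. \<Sum>j<2. pauli l a i * X $$ (i,j) * pauli l j b)" for l
  have c: "pauliX * X * pauliX \<in> carrier_mat 2 2" "pauliY * X * pauliY \<in> carrier_mat 2 2"
    "pauliZ * X * pauliZ \<in> carrier_mat 2 2"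
    using pauli_carrier X by (meson mult_carrier_mat)+
  have s0: "X $$ (a,b) = S 0" unfolding S_def
    using a b by (simp add: sum_lt2 pauli_def) (use a b in \<open>auto simp: less_2_cases\<close>)
  have s123: "(pauliX*X*pauliX) $$ (a,b) = S 1" "(pauliY*X*pauliY) $$ (a,b) = S 2"
    "(pauliZ*X*pauliZ) $$ (a,b) = S 3"
    unfolding S_def conjugation_entry[OF pauli_carrier(1) X a b] conjugation_entry[OF pauli_carrier(2) X a b]
      conjugation_entry[OF pauli_carrier(3) X a b]
    by (intro sum.cong refl; simp add: pauli_matrices a b)+
  define A1 where "A1 = pauliX * X * pauliX"
  define A2 where "A2 = pauliY * X * pauliY"
  define A3 where "A3 = pauliZ * X * pauliZ"
  have "pauli_map w x y z X $$ (a,b) = complex_of_real w * X $$ (a,b) + complex_of_real x * A1 $$ (a,b)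
      + complex_of_real y * A2 $$ (a,b) + complex_of_real z * A3 $$ (a,b)"
    unfolding pauli_map_def A1_def[symmetric] A2_def[symmetric] A3_def[symmetric]
    using c X a b unfolding A1_def[symmetric] A2_def[symmetric] A3_def[symmetric] by simp
  then show ?thesis
    unfolding S_def[symmetric] sum_lt4 A1_def A2_def A3_def s0 s123 by simp
qed

subsection \<open>The simulation: a Kraus channel controlled by the Pauli label\<close>

text \<open>Kraus operators on \<open>\<complex>\<^sup>2 \<otimes> \<complex>\<^sup>4\<close>: \<open>K\<^sub>l = \<sigma>\<^sub>l \<otimes> \<langle>l|\<close>, i.e. apply \<open>\<sigma>\<^sub>l\<close> if the label is \<open>l\<close>.\<close>
definition pauli_kraus :: "nat \<Rightarrow> nat \<Rightarrow> nat \<Rightarrow> complex" where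
  "pauli_kraus l a I = (if I mod 4 = l then pauli l a (I div 4) else 0)"

lemma pauli_kraus_complete:
  assumes I: "I < 2*4" and J: "J < 2*4"
  shows "(\<Sum>l<4. \<Sum>a<2. pauli_kraus l a I * cnj (pauli_kraus l a J)) = (if I = J then 1 else 0)"
proof -
  have "(\<Sum>l<4. \<Sum>a<2. pauli_kraus l a I * cnj (pauli_kraus l a J))
      = (\<Sum>l<4. if l = I mod 4 then (if I mod 4 = J mod 4
          then (\<Sum>a<2. pauli l a (I div 4) * cnj (pauli l a (J div 4))) else 0) else 0)"
    unfolding pauli_kraus_def by (rule sum.cong[OF refl]) auto
  also have "\<dots> = (if I mod 4 = J mod 4 then (if I div 4 = J div 4 then 1 else 0) else 0)"
    using I J by (simp add: sum.delta' pauli_unitary less_mult_imp_div_less)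
  also have "\<dots> = (if I = J then 1 else 0)"
    by (metis div_mult_mod_eq)
  finally show ?thesis .
qed

lemma pauli_kraus_channel: "channel (2*4) 2 (kraus_map 4 (2*4) 2 pauli_kraus)"
  by (rule kraus_map_channel) (rule pauli_kraus_complete)

lemma pauli_kraus_entry:
  assumes a: "a < 2" and b: "b < 2"
  shows "kraus_map 4 (2*4) 2 pauli_kraus Y $$ (a,b)
    = (\<Sum>l<4. \<Sum>i<2. \<Sum>j<2. pauli l a i * Y $$ (i*4+l, j*4+l) * cnj (pauli l b j))"
proof -
  have K: "pauli_kraus l x (i*4+c) = (if c = l then pauli l x i else 0)" if "c < 4" for l x i c
    unfolding pauli_kraus_def using that by simp
  have "kraus_map 4 (2*4) 2 pauli_kraus Y $$ (a,b)
      = (\<Sum>l<4. \<Sum>i<2. \<Sum>c<4. \<Sum>j<2. \<Sum>e<4.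
          pauli_kraus l a (i*4+c) * Y $$ (i*4+c, j*4+e) * cnj (pauli_kraus l b (j*4+e)))"
    unfolding kraus_map_def sum_blocks using a b by simp
  also have "\<dots> = (\<Sum>l<4. \<Sum>i<2. \<Sum>j<2. pauli l a i * Y $$ (i*4+l, j*4+l) * cnj (pauli l b j))"
  proof (rule sum.cong[OF refl], rule sum.cong[OF refl])
    fix l i :: nat assume l: "l \<in> {..<4}"
    have inner: "(\<Sum>e<4. pauli_kraus l a (i*4+c) * Y $$ (i*4+c, j*4+e) * cnj (pauli_kraus l b (j*4+e)))
        = pauli_kraus l a (i*4+c) * Y $$ (i*4+c, j*4+l) * cnj (pauli l b j)" for c j
    proof -
      have "(\<Sum>e<4. pauli_kraus l a (i*4+c) * Y $$ (i*4+c, j*4+e) * cnj (pauli_kraus l b (j*4+e)))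
          = (\<Sum>e<4. if e = l then pauli_kraus l a (i*4+c) * Y $$ (i*4+c, j*4+l) * cnj (pauli l b j) else 0)"
        by (rule sum.cong[OF refl]) (simp add: K)
      then show ?thesis using l by (simp add: sum.delta')
    qed
    have "(\<Sum>c<4. \<Sum>j<2. \<Sum>e<4. pauli_kraus l a (i*4+c) * Y $$ (i*4+c, j*4+e) * cnj (pauli_kraus l b (j*4+e)))
        = (\<Sum>c<4. if c = l then (\<Sum>j<2. pauli l a i * Y $$ (i*4+l, j*4+l) * cnj (pauli l b j)) else 0)"
      unfolding inner by (rule sum.cong[OF refl]) (simp add: K)
    then show "(\<Sum>c<4. \<Sum>j<2. \<Sum>e<4. pauli_kraus l a (i*4+c) * Y $$ (i*4+c, j*4+e) * cnj (pauli_kraus l b (j*4+e)))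
        = (\<Sum>j<2. pauli l a i * Y $$ (i*4+l, j*4+l) * cnj (pauli l b j))"
      using l by (simp add: sum.delta')
  qed
  finally show ?thesis .
qed

text \<open>The Pauli map with weights \<open>(w,x,y,z)\<close> is \<open>X \<mapsto> \<Lambda>(X \<otimes> diag(w,x,y,z))\<close> for the
  controlled-Pauli channel \<open>\<Lambda>\<close>; this holds for arbitrary real weights, so it covers both the
  channel and its derivative.\<close>
lemma pauli_simulation:
  assumes X: "X \<in> carrier_mat 2 2"
  shows "pauli_map w x y z X = kraus_map 4 (2*4) 2 pauli_kraus (kron X (diag_op 4 (\<lambda>l. [w,x,y,z] ! l)))"
proof (rule eq_matI)
  fix a b assume "a < dim_row (kraus_map 4 (2*4) 2 pauli_kraus (kron X (diag_op 4 (\<lambda>l. [w,x,y,z] ! l))))"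
    and "b < dim_col (kraus_map 4 (2*4) 2 pauli_kraus (kron X (diag_op 4 (\<lambda>l. [w,x,y,z] ! l))))"
  then have a: "a < 2" and b: "b < 2" unfolding kraus_map_def by auto
  have Y: "kron X (diag_op 4 (\<lambda>l. [w,x,y,z] ! l)) $$ (i*4+l, j*4+l) = X $$ (i,j) * complex_of_real ([w,x,y,z] ! l)"
    if "i < 2" "j < 2" "l < 4" for i j l
  proof -
    have "i*4+l < 2*4" "j*4+l < 2*4" using that block_index_less by auto
    then show ?thesis using kron_entry[OF X diag_op_carrier] that by (simp add: diag_op_entry)
  qed
  have "kraus_map 4 (2*4) 2 pauli_kraus (kron X (diag_op 4 (\<lambda>l. [w,x,y,z] ! l))) $$ (a,b)
      = (\<Sum>l<4. \<Sum>i<2. \<Sum>j<2. pauli l a i * (X $$ (i,j) * complex_of_real ([w,x,y,z] ! l)) * pauli l j b)"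
    unfolding pauli_kraus_entry[OF a b] by (intro sum.cong refl) (simp add: Y pauli_hermitian b)
  also have "\<dots> = pauli_map w x y z X $$ (a,b)"
    unfolding pauli_map_entry[OF X a b] by (simp add: sum_distrib_left mult_ac)
  finally show "pauli_map w x y z X $$ (a,b) = kraus_map 4 (2*4) 2 pauli_kraus (kron X (diag_op 4 (\<lambda>l. [w,x,y,z] ! l))) $$ (a,b)"
    by simp
qed (use X pauli_carrier in \<open>auto simp: kraus_map_def pauli_map_def carrier_matD\<close>)

lemma pauli_Gmax_le:
  assumes "w \<ge> 0" "x \<ge> 0" "y \<ge> 0" "z \<ge> 0" "w + x + y + z = 1" "dw + dx + dy + dz = 0"
  shows "Gmax 2 2 (pauli_map w x y z) (pauli_map dw dx dy dz)
    \<le> Jfi {0..<4} (\<lambda>l. [w,x,y,z] ! l) (\<lambda>l. [dw,dx,dy,dz] ! l)"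
  unfolding Gmax_def
proof (rule Inf_lower, intro CollectI exI conjI)
  show "\<forall>X\<in>carrier_mat 2 2.
      pauli_map w x y z X = kraus_map 4 (2*4) 2 pauli_kraus (kron X (diag_op 4 (\<lambda>l. [w,x,y,z] ! l))) \<and>
      pauli_map dw dx dy dz X = kraus_map 4 (2*4) 2 pauli_kraus (kron X (diag_op 4 (\<lambda>l. [dw,dx,dy,dz] ! l)))"
    using pauli_simulation by blast
qed (use assms pauli_kraus_channel in \<open>auto simp: less_4_cases sum_lt4\<close>)

subsection \<open>The lower bound: Bell state and Bell measurement\<close>

text \<open>\<open>bell_vec l\<close> is \<open>\<surd>2 (\<sigma>\<^sub>l \<otimes> 1)|\<Phi>\<^sup>+\<rangle>\<close> on \<open>\<complex>\<^sup>2 \<otimes> \<complex>\<^sup>2\<close>; the normalised projections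
  onto these four orthogonal vectors form the Bell basis.\<close>
definition bell_vec :: "nat \<Rightarrow> nat \<Rightarrow> complex" where
  "bell_vec l u = pauli l (u div 2) (u mod 2)"

definition bell_proj :: "nat \<Rightarrow> complex mat" where
  "bell_proj l = mat 4 4 (\<lambda>(u,v). bell_vec l u * cnj (bell_vec l v) / 2)"

lemma psd_rank_one_half: "psd d (mat d d (\<lambda>(u,v). b u * cnj (b v) / 2))"
  unfolding psd_iff_psd_form
proof
  have e: "sform d (\<lambda>i j. b i * cnj (b j) / 2) f f = complex_of_real ((cmod (\<Sum>i<d. cnj (f i) * b i))\<^sup>2 / 2)" for f
  proof -
    have "sform d (\<lambda>i j. b i * cnj (b j) / 2) f f = sform d (\<lambda>i j. b i * cnj (b j)) f f / 2"
      unfolding sform_def by (simp add: sum_divide_distrib)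
    also have "sform d (\<lambda>i j. b i * cnj (b j)) f f = complex_of_real ((cmod (\<Sum>i<d. cnj (f i) * b i))\<^sup>2)"
      unfolding sform_rank_one complex_norm_square ..
    finally show ?thesis by simp
  qed
  have "psd_form d (\<lambda>i j. b i * cnj (b j) / 2)" unfolding psd_form_def e by simp
  then show "psd_form d (\<lambda>i j. mat d d (\<lambda>(u,v). b u * cnj (b v) / 2) $$ (i,j))"
    by (rule psd_form_cong) simp
qed simp

lemma bell_orthogonal: "y < 4 \<Longrightarrow> l < 4 \<Longrightarrow> (\<Sum>u<4. cnj (bell_vec y u) * bell_vec l u) = (if y = l then 2 else 0)"
  unfolding less_4_cases by (elim disjE) (simp_all add: sum_lt4 bell_vec_def pauli_def)

lemma bell_complete: "i < 4 \<Longrightarrow> j < 4 \<Longrightarrow> (\<Sum>y<4. bell_vec y i * cnj (bell_vec y j)) = (if i = j then 2 else 0)"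
  unfolding less_4_cases by (elim disjE) (simp_all add: sum_lt4 bell_vec_def pauli_def)

lemma bell_state_density: "density (2*2) (bell_proj 0)"
  unfolding density_def bell_proj_def
  by (simp add: psd_rank_one_half mtrace_def sum_lt4 bell_vec_def pauli_def)

lemma bell_povm: "povm (2*2) 4 bell_proj"
  unfolding povm_def
proof (intro conjI allI impI)
  fix y :: nat show "psd (2*2) (bell_proj y)" unfolding bell_proj_def by (simp add: psd_rank_one_half)
next
  fix i j :: nat assume i: "i < 2*2" and j: "j < 2*2"
  have "(\<Sum>y<4. bell_proj y $$ (i,j)) = (\<Sum>y<4. bell_vec y i * cnj (bell_vec y j)) / 2"
    unfolding bell_proj_def using i j by (simp add: sum_divide_distrib)
  then show "(\<Sum>y<4. bell_proj y $$ (i,j)) = (1\<^sub>m (2*2) :: complex mat) $$ (i,j)"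
    using bell_complete[of i j] i j by (cases "i = j") simp_all
qed

lemma bell_proj_entry: "u < 4 \<Longrightarrow> v < 4 \<Longrightarrow> bell_proj l $$ (u,v) = bell_vec l u * cnj (bell_vec l v) / 2"
  unfolding bell_proj_def by simp

lemma bell_output:
  assumes u: "u < 4" and v: "v < 4"
  shows "tensor_id 2 2 2 (pauli_map w x y z) (bell_proj 0) $$ (u,v)
    = (\<Sum>l<4. complex_of_real ([w,x,y,z] ! l) * (bell_vec l u * cnj (bell_vec l v) / 2))"
proof -
  define A where "A = mat 2 2 (\<lambda>(i,j). bell_proj 0 $$ (i*2 + u mod 2, j*2 + v mod 2))"
  have A: "A \<in> carrier_mat 2 2" unfolding A_def by simp
  have ab: "u div 2 < 2" "v div 2 < 2" using u v by auto
  have Ae: "A $$ (i,j) = (if i = u mod 2 \<and> j = v mod 2 then 1/2 else 0)" if "i < 2" "j < 2" for i j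
  proof -
    have "i*2 + u mod 2 < 4" "j*2 + v mod 2 < 4" using that by auto
    then show ?thesis unfolding A_def bell_proj_def bell_vec_def using that by (auto simp: pauli_def)
  qed
  have inner: "(\<Sum>i<2. \<Sum>j<2. pauli l (u div 2) i * A $$ (i,j) * pauli l j (v div 2))
      = bell_vec l u * cnj (bell_vec l v) / 2" if l: "l < 4" for l
  proof -
    have "(\<Sum>i<2. \<Sum>j<2. pauli l (u div 2) i * A $$ (i,j) * pauli l j (v div 2))
        = pauli l (u div 2) (u mod 2) * (1/2) * pauli l (v mod 2) (v div 2)"
      by (simp add: Ae sum_lt2 less_2_cases)
    also have "\<dots> = bell_vec l u * cnj (bell_vec l v) / 2"
      using pauli_hermitian[of l "v div 2" "v mod 2"] l v by (simp add: bell_vec_def)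
    finally show ?thesis .
  qed
  have "tensor_id 2 2 2 (pauli_map w x y z) (bell_proj 0) $$ (u,v) = pauli_map w x y z A $$ (u div 2, v div 2)"
    unfolding tensor_id_def A_def using u v by simp
  also have "\<dots> = (\<Sum>l<4. complex_of_real ([w,x,y,z] ! l) * (bell_vec l u * cnj (bell_vec l v) / 2))"
    unfolding pauli_map_entry[OF A ab] by (intro sum.cong refl) (simp add: inner)
  finally show ?thesis .
qed

lemma sum_product_scaled: "(c::complex) * ((\<Sum>u<a. A u) * (\<Sum>v<b. B v)) = (\<Sum>u<a. \<Sum>v<b. c * (A u * B v))"
proof -
  have "(\<Sum>u<a. A u) * (\<Sum>v<b. B v) = (\<Sum>u<a. \<Sum>v<b. A u * B v)" by (rule sum_product)
  then show ?thesis by (simp add: sum_distrib_left)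
qed

lemma bell_statistics:
  assumes l': "l' < 4"
  shows "Re (mtrace (tensor_id 2 2 2 (pauli_map w x y z) (bell_proj 0) * bell_proj l')) = [w,x,y,z] ! l'"
proof -
  define T where "T = tensor_id 2 2 2 (pauli_map w x y z) (bell_proj 0)"
  define f where "f l = complex_of_real ([w,x,y,z] ! l)" for l
  have Tc: "T \<in> carrier_mat 4 4" unfolding T_def tensor_id_def by simp
  have Mc: "bell_proj l' \<in> carrier_mat 4 4" unfolding bell_proj_def by simp
  have "mtrace (T * bell_proj l')
      = (\<Sum>u<4. \<Sum>v<4. (\<Sum>l<4. f l * (bell_vec l u * cnj (bell_vec l v) / 2)) * (bell_vec l' v * cnj (bell_vec l' u) / 2))"
    unfolding mtrace_mult[OF Tc Mc] trace_prod_def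
    by (rule sum.cong[OF refl], rule sum.cong[OF refl]) (simp add: bell_output bell_proj_entry T_def f_def)
  also have "\<dots> = (\<Sum>l<4. f l / 4 * ((\<Sum>u<4. cnj (bell_vec l' u) * bell_vec l u) * (\<Sum>v<4. cnj (bell_vec l v) * bell_vec l' v)))"
  proof -
    have "(\<Sum>u<4. \<Sum>v<4. (\<Sum>l<4. f l * (bell_vec l u * cnj (bell_vec l v) / 2)) * (bell_vec l' v * cnj (bell_vec l' u) / 2))
        = (\<Sum>u<4. \<Sum>v<4. \<Sum>l<4. f l / 4 * ((cnj (bell_vec l' u) * bell_vec l u) * (cnj (bell_vec l v) * bell_vec l' v)))"
      by (rule sum.cong[OF refl], rule sum.cong[OF refl], subst sum_distrib_right, rule sum.cong[OF refl])
        (simp add: field_simps)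
    also have "\<dots> = (\<Sum>l<4. \<Sum>u<4. \<Sum>v<4. f l / 4 * ((cnj (bell_vec l' u) * bell_vec l u) * (cnj (bell_vec l v) * bell_vec l' v)))"
      by (rule sum_rotate3[symmetric])
    finally show ?thesis by (rule trans) (rule sum.cong[OF refl], rule sum_product_scaled[symmetric])
  qed
  also have "\<dots> = (\<Sum>l<4. if l = l' then f l else 0)"
    by (intro sum.cong refl) (use l' in \<open>auto simp: bell_orthogonal\<close>)
  also have "\<dots> = f l'" using l' by (simp add: sum.delta')
  finally show ?thesis unfolding T_def f_def by simp
qed

lemma pauli_Gmin_ge:
  "Jfi {0..<4} (\<lambda>l. [w,x,y,z] ! l) (\<lambda>l. [dw,dx,dy,dz] ! l) \<le> Gmin 2 2 (pauli_map w x y z) (pauli_map dw dx dy dz)"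
proof -
  have "Jfi {0..<4} (\<lambda>l. [w,x,y,z] ! l) (\<lambda>l. [dw,dx,dy,dz] ! l)
      = Jfi {0..<4} (\<lambda>l. Re (mtrace (tensor_id 2 2 2 (pauli_map w x y z) (bell_proj 0) * bell_proj l)))
          (\<lambda>l. Re (mtrace (tensor_id 2 2 2 (pauli_map dw dx dy dz) (bell_proj 0) * bell_proj l)))"
    unfolding Jfi_def by (intro sum.cong refl) (simp add: bell_statistics)
  also have "\<dots> \<le> Gmin 2 2 (pauli_map w x y z) (pauli_map dw dx dy dz)"
    unfolding Gmin_def
    by (rule Sup_upper, rule CollectI, rule exI[of _ 2], rule exI[of _ "bell_proj 0"], rule exI[of _ 4],
        rule exI[of _ bell_proj]) (use bell_state_density bell_povm in simp)
  finally show ?thesis .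
qed

theorem mainTheorem4:
  fixes px py pz dpx dpy dpz :: "real \<Rightarrow> real"
  assumes "\<And>t. (px has_real_derivative dpx t) (at t)"
      and "\<And>t. (py has_real_derivative dpy t) (at t)"
      and "\<And>t. (pz has_real_derivative dpz t) (at t)"
      and "\<And>t. px t \<ge> 0" and "\<And>t. py t \<ge> 0" and "\<And>t. pz t \<ge> 0"
      and "\<And>t. px t + py t + pz t \<le> 1"
  shows "\<forall>\<theta>. let
           \<Lambda> = pauli_map (1 - px \<theta> - py \<theta> - pz \<theta>) (px \<theta>) (py \<theta>) (pz \<theta>);
           \<Delta> = pauli_map (- dpx \<theta> - dpy \<theta> - dpz \<theta>) (dpx \<theta>) (dpy \<theta>) (dpz \<theta>);
           q = (\<lambda>y::nat. [1 - px \<theta> - py \<theta> - pz \<theta>, px \<theta>, py \<theta>, pz \<theta>] ! y);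
           \<delta> = (\<lambda>y::nat. [- dpx \<theta> - dpy \<theta> - dpz \<theta>, dpx \<theta>, dpy \<theta>, dpz \<theta>] ! y)
         in Gmin 2 2 \<Lambda> \<Delta> = Jfi {0..<4} q \<delta> \<and> Gmax 2 2 \<Lambda> \<Delta> = Jfi {0..<4} q \<delta>"
  unfolding Let_def
proof (intro allI)
  fix \<theta>
  let ?w = "1 - px \<theta> - py \<theta> - pz \<theta>" and ?dw = "- dpx \<theta> - dpy \<theta> - dpz \<theta>"
  let ?\<Lambda> = "pauli_map ?w (px \<theta>) (py \<theta>) (pz \<theta>)" and ?\<Delta> = "pauli_map ?dw (dpx \<theta>) (dpy \<theta>) (dpz \<theta>)"
  let ?J = "Jfi {0..<4} (\<lambda>l. [?w, px \<theta>, py \<theta>, pz \<theta>] ! l) (\<lambda>l. [?dw, dpx \<theta>, dpy \<theta>, dpz \<theta>] ! l)"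
  have lower: "?J \<le> Gmin 2 2 ?\<Lambda> ?\<Delta>" by (rule pauli_Gmin_ge)
  have middle: "Gmin 2 2 ?\<Lambda> ?\<Delta> \<le> Gmax 2 2 ?\<Lambda> ?\<Delta>" by (rule Gmin_le_Gmax)
  have upper: "Gmax 2 2 ?\<Lambda> ?\<Delta> \<le> ?J"
    by (rule pauli_Gmax_le) (use assms(4-7)[of \<theta>] in auto)
  from lower middle upper show "Gmin 2 2 ?\<Lambda> ?\<Delta> = ?J \<and> Gmax 2 2 ?\<Lambda> ?\<Delta> = ?J"
    by (meson antisym order_trans)
qed

end
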